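(* Let $V=\{1,\dots,N\}$, $V^{\mathrm{abs}}=\{0,N+1\}$, $V^*=V\cup V^{\mathrm{abs}}$, and let $\{\eta(t),t\ge0\}$ be a consistent configuration process on $V^*$ with generator $\mathcal L^{\mathrm{abs}}=\mathcal L+\mathcal H$. Let $G(\eta,z)=\mathbb E_\eta[z^{\eta_0(\infty)}]$, $G^{\mathrm{irw}}(\eta,z)=\mathbb E^{\mathrm{irw}}_\eta[z^{\eta_0(\infty)}]$, and $\mathcal G(\eta,z):=G(\eta,z)-G^{\mathrm{irw}}(\eta,z)$ for $z\ge0$. Then for all $\mathbf x=(x_1,\dots,x_n)\in(V^* )^n$, $$\mathcal G(\phi(\mathbf x),z)=\sum_{\kappa=2}^nz^{n-\kappa}(1-z)^\kappa\sum_{1\le i_1<\dots<i_\kappa\le n}\mathcal G(\phi(x_{i_1},\dots,x_{i_\kappa}),0),$$ where $\mathcal G(\eta,0)=\mathbb P_\eta(\eta_0(\infty)=0)-\mathbb P^{\mathrm{irw}}_\eta(\eta_0(\infty)=0)$.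
   Context: Rates $r(i,j)\ge0$ for $i\in V$, $j\in\{0,N+1\}$. $\mathcal L$ generates a configuration process on $V$ (single-site space $\Lambda\subseteq\mathbb N_0$), acting only on $(\eta_i)_{i\in V}$; $\mathcal Hf(\eta)=\sum_{i\in V,j\in V^{\mathrm{abs}}}r(i,j)\eta_i[f(\eta-\delta_i+\delta_j)-f(\eta)]$. Consistency: $[\mathcal L^{\mathrm{abs}},\mathcal A]=0$, $\mathcal Af(\eta)=\sum_{x\in V^*}\eta_xf(\eta-\delta_x)$. $\phi(\mathbf y)=\sum_i\delta_{y_i}$. The associated random walk $X^{\mathrm{rw}}$ on $V^*$ is the single-particle motion: if $\eta(0)=\delta_u$ then $\eta(t)=\delta_{X^{\mathrm{rw}}(t)}$. The independent-walker process $\eta^{\mathrm{irw}}$ is the configuration process of $n$ independent copies of $X^{\mathrm{rw}}$ (for every $n$), with law $\mathbb P^{\mathrm{irw}}_\eta$ and expectation $\mathbb E^{\mathrm{irw}}_\eta$ when started from $\eta$. $\eta_0(\infty)$ is the number of particles eventually absorbed at $0$ (limit $t\to\infty$); $G(\eta,0):=\lim_{z\to0}G(\eta,z)$. *)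

theory Defs
  imports "HOL-Analysis.Analysis"
begin

text \<open>Configurations on V* = {0..N+1}: functions nat => nat vanishing outside V*.
  Bulk V = {1..N}, absorbing sites 0 and N+1.  Lam is the single-site space on V.\<close>

type_synonym conf = "nat \<Rightarrow> nat"

definition valid :: "nat \<Rightarrow> nat set \<Rightarrow> conf \<Rightarrow> bool" where
  "valid N Lam \<eta> \<longleftrightarrow> (\<forall>y. y \<notin> {0..N+1} \<longrightarrow> \<eta> y = 0) \<and> (\<forall>i\<in>{1..N}. \<eta> i \<in> Lam)"

definition OmegaV :: "nat \<Rightarrow> nat set \<Rightarrow> nat \<Rightarrow> conf set" where
  "OmegaV N Lam m = {\<xi>. (\<forall>y. y \<notin> {1..N} \<longrightarrow> \<xi> y = 0) \<and> (\<forall>i\<in>{1..N}. \<xi> i \<in> Lam)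
                         \<and> (\<Sum>i\<in>{1..N}. \<xi> i) = m}"

definition restrV :: "nat \<Rightarrow> conf \<Rightarrow> conf" where
  "restrV N \<eta> = (\<lambda>y. if y \<in> {1..N} then \<eta> y else 0)"

definition absPart :: "nat \<Rightarrow> conf \<Rightarrow> conf" where
  "absPart N \<eta> = (\<lambda>y. if y \<in> {1..N} then 0 else \<eta> y)"

definition genL :: "nat \<Rightarrow> nat set \<Rightarrow> (conf \<Rightarrow> conf \<Rightarrow> real) \<Rightarrow> (conf \<Rightarrow> real) \<Rightarrow> conf \<Rightarrow> real" where
  "genL N Lam c f \<eta> =
     (\<Sum>\<xi>'\<in>OmegaV N Lam (\<Sum>i\<in>{1..N}. \<eta> i).
        c (restrV N \<eta>) \<xi>' * (f (\<lambda>y. \<xi>' y + absPart N \<eta> y) - f \<eta>))"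

definition genH :: "nat \<Rightarrow> (nat \<Rightarrow> nat \<Rightarrow> real) \<Rightarrow> (conf \<Rightarrow> real) \<Rightarrow> conf \<Rightarrow> real" where
  "genH N r f \<eta> =
     (\<Sum>i\<in>{1..N}. \<Sum>j\<in>{0, N+1}.
        r i j * real (\<eta> i) * (f (\<eta>(i := \<eta> i - 1, j := \<eta> j + 1)) - f \<eta>))"

definition genLabs :: "nat \<Rightarrow> nat set \<Rightarrow> (conf \<Rightarrow> conf \<Rightarrow> real) \<Rightarrow> (nat \<Rightarrow> nat \<Rightarrow> real)
     \<Rightarrow> (conf \<Rightarrow> real) \<Rightarrow> conf \<Rightarrow> real" where
  "genLabs N Lam c r f \<eta> = genL N Lam c f \<eta> + genH N r f \<eta>"

definition annihA :: "nat \<Rightarrow> (conf \<Rightarrow> real) \<Rightarrow> conf \<Rightarrow> real" where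
  "annihA N f \<eta> = (\<Sum>x\<in>{0..N+1}. real (\<eta> x) * f (\<eta>(x := \<eta> x - 1)))"

definition consistent :: "nat \<Rightarrow> nat set \<Rightarrow> (conf \<Rightarrow> conf \<Rightarrow> real) \<Rightarrow> (nat \<Rightarrow> nat \<Rightarrow> real) \<Rightarrow> bool" where
  "consistent N Lam c r \<longleftrightarrow>
     (\<forall>f \<eta>. valid N Lam \<eta> \<longrightarrow>
        genLabs N Lam c r (annihA N f) \<eta> = annihA N (genLabs N Lam c r f) \<eta>)"

text \<open>Markov semigroup e^{t Gen} (the process has finitely many states for a fixed
  particle number, so this is the matrix exponential of the generator).\<close>
definition semigroup :: "((conf \<Rightarrow> real) \<Rightarrow> conf \<Rightarrow> real) \<Rightarrow> real \<Rightarrow> (conf \<Rightarrow> real) \<Rightarrow> conf \<Rightarrow> real" where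
  "semigroup Gen t f \<eta> = (\<Sum>k. t ^ k / fact k * (Gen ^^ k) f \<eta>)"

text \<open>G(eta,z) = E_eta[z^{eta_0(infinity)}] = lim_{t->oo} E_eta[z^{eta_0(t)}]  (with 0^0 = 1).\<close>
definition absorb_gf :: "((conf \<Rightarrow> real) \<Rightarrow> conf \<Rightarrow> real) \<Rightarrow> conf \<Rightarrow> real \<Rightarrow> real" where
  "absorb_gf Gen \<eta> z = Lim at_top (\<lambda>t::real. semigroup Gen t (\<lambda>\<zeta>. z ^ \<zeta> 0) \<eta>)"

definition delta :: "nat \<Rightarrow> conf" where
  "delta u = (\<lambda>x. if x = u then 1 else 0)"

text \<open>Jump rate x -> y of the associated single-particle random walk X^rw.\<close>
definition rw_rate :: "nat \<Rightarrow> nat set \<Rightarrow> (conf \<Rightarrow> conf \<Rightarrow> real) \<Rightarrow> (nat \<Rightarrow> nat \<Rightarrow> real) \<Rightarrow> nat \<Rightarrow> nat \<Rightarrow> real" where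
  "rw_rate N Lam c r x y = genLabs N Lam c r (\<lambda>\<zeta>. if \<zeta> = delta y then 1 else 0) (delta x)"

definition genIRW :: "nat \<Rightarrow> nat set \<Rightarrow> (conf \<Rightarrow> conf \<Rightarrow> real) \<Rightarrow> (nat \<Rightarrow> nat \<Rightarrow> real)
     \<Rightarrow> (conf \<Rightarrow> real) \<Rightarrow> conf \<Rightarrow> real" where
  "genIRW N Lam c r f \<eta> =
     (\<Sum>x\<in>{0..N+1}. \<Sum>y\<in>{0..N+1} - {x}.
        real (\<eta> x) * rw_rate N Lam c r x y * (f (\<eta>(x := \<eta> x - 1, y := \<eta> y + 1)) - f \<eta>))"

definition calG :: "nat \<Rightarrow> nat set \<Rightarrow> (conf \<Rightarrow> conf \<Rightarrow> real) \<Rightarrow> (nat \<Rightarrow> nat \<Rightarrow> real) \<Rightarrow> conf \<Rightarrow> real \<Rightarrow> real" where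
  "calG N Lam c r \<eta> z = absorb_gf (genLabs N Lam c r) \<eta> z - absorb_gf (genIRW N Lam c r) \<eta> z"

definition phi :: "nat list \<Rightarrow> conf" where
  "phi ys = (\<lambda>u. length (filter (\<lambda>y. y = u) ys))"

end

(*
  Consistency says that the generator commutes with the annihilation operator A; by locality
  and linearity so does its semigroup on each particle-number level.  When b of the n
  particles sit at 0, the binomial theorem gives z^b = sum_k z^(n-k) (1-z)^k C(n-b, k), and
  (n-k)! C(n-b, k) is A^(n-k) applied to the indicator of {eta_0 = 0}.  Hence E[z^eta_0(t)]
  started from phi(x) is the sum over k-subsets S of z^(n-k) (1-z)^k P(eta_0(t) = 0) started
  from phi(x_S); letting t -> oo (these probabilities decrease since 0 is absorbing) gives the
  same expansion of G.  Independent walkers are consistent too, so subtracting the two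
  expansions gives the claim: the terms with at most one particle cancel, because a single
  particle moves as the random walk in both processes.
*)

theory Submission
  imports Defs
begin

section \<open>Exponential series of finite-state jump generators\<close>

lemma funpow_abs_bound:
  fixes Op :: "('a \<Rightarrow> real) \<Rightarrow> 'a \<Rightarrow> real"
  assumes step: "\<And>g B. \<forall>x\<in>S. \<bar>g x\<bar> \<le> B \<Longrightarrow> \<forall>x\<in>S. \<bar>Op g x\<bar> \<le> K * B"
    and g: "\<forall>x\<in>S. \<bar>g x\<bar> \<le> B"
  shows "\<forall>x\<in>S. \<bar>(Op ^^ k) g x\<bar> \<le> K ^ k * B"
proof (induction k)
  case 0
  then show ?case using g by simp
next
  case (Suc k)
  then show ?case using step[OF Suc] by (simp add: mult.assoc)
qed

lemma summable_exp_series_abs: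
  fixes a :: "nat \<Rightarrow> real"
  assumes "\<And>k. \<bar>a k\<bar> \<le> K ^ k * B"
  shows "summable (\<lambda>k. \<bar>t ^ k / fact k * a k\<bar>)"
proof (rule summable_comparison_test)
  have "summable (\<lambda>k. (\<bar>t\<bar> * K) ^ k / fact k)"
    using summable_exp[of "\<bar>t\<bar> * K"] by (simp add: divide_inverse mult.commute)
  then show "summable (\<lambda>k. B * ((\<bar>t\<bar> * K) ^ k / fact k))"
    by (rule summable_mult)
  have "\<bar>t ^ k / fact k * a k\<bar> \<le> B * ((\<bar>t\<bar> * K) ^ k / fact k)" for k
  proof -
    have "\<bar>t ^ k / fact k * a k\<bar> = \<bar>t\<bar> ^ k / fact k * \<bar>a k\<bar>"
      by (simp add: abs_mult power_abs)
    also have "\<dots> \<le> \<bar>t\<bar> ^ k / fact k * (K ^ k * B)"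
      by (intro mult_left_mono assms) auto
    finally show ?thesis
      by (simp add: power_mult_distrib mult_ac)
  qed
  then show "\<exists>N. \<forall>k\<ge>N. norm \<bar>t ^ k / fact k * a k\<bar> \<le> B * ((\<bar>t\<bar> * K) ^ k / fact k)"
    by auto
qed

lemma power_fact_choose:
  fixes t :: real
  assumes "j \<le> k"
  shows "t ^ k / fact k * real (k choose j) = t ^ j / fact j * (t ^ (k - j) / fact (k - j))"
proof -
  have "t ^ k = t ^ j * t ^ (k - j)"
    using assms by (simp add: power_add[symmetric])
  then show ?thesis
    using assms by (simp add: binomial_fact divide_simps)
qed

lemma sum_choose_Suc_recurrence:
  fixes a :: real and r :: "nat \<Rightarrow> real"
  shows "(\<Sum>j\<le>k. real (k choose j) * a ^ (k - j) * (r (Suc j) + a * r j)) =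
         (\<Sum>j\<le>Suc k. real (Suc k choose j) * a ^ (Suc k - j) * r j)"
proof -
  have shifted: "(\<Sum>j\<le>k. real (k choose j) * a ^ Suc (k - j) * r j) =
      a ^ Suc k * r 0 + (\<Sum>j\<le>k. real (k choose Suc j) * a ^ (k - j) * r (Suc j))"
  proof (cases k)
    case (Suc m)
    have "(\<Sum>j\<le>Suc m. real (Suc m choose Suc j) * a ^ (Suc m - j) * r (Suc j)) =
        (\<Sum>j\<le>m. real (Suc m choose Suc j) * a ^ Suc (Suc m - Suc j) * r (Suc j))"
      by (simp add: Suc_diff_le binomial_eq_0)
    then show ?thesis
      unfolding Suc by (subst sum.atMost_Suc_shift) simp
  qed simp
  have "(\<Sum>j\<le>k. real (k choose j) * a ^ (k - j) * (r (Suc j) + a * r j)) =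
      (\<Sum>j\<le>k. real (k choose j) * a ^ (k - j) * r (Suc j)) +
      (\<Sum>j\<le>k. real (k choose j) * a ^ Suc (k - j) * r j)"
    by (simp add: sum.distrib algebra_simps)
  also have "\<dots> = a ^ Suc k * r 0 + (\<Sum>j\<le>k. real (Suc k choose Suc j) * a ^ (k - j) * r (Suc j))"
    unfolding shifted by (simp add: sum.distrib algebra_simps)
  also have "\<dots> = (\<Sum>j\<le>Suc k. real (Suc k choose j) * a ^ (Suc k - j) * r j)"
    by (subst sum.atMost_Suc_shift) simp
  finally show ?thesis .
qed

lemma antimono_nonneg_convergent_at_top:
  fixes h :: "real \<Rightarrow> real"
  assumes antimono: "\<And>s t. 0 \<le> s \<Longrightarrow> s \<le> t \<Longrightarrow> h t \<le> h s"
    and nonneg: "\<And>t. 0 \<le> t \<Longrightarrow> 0 \<le> h t"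
  shows "\<exists>L. (h \<longlongrightarrow> L) at_top"
proof
  let ?L = "Inf (h ` {0..})"
  have bdd: "bdd_below (h ` {0..})"
    using nonneg by (auto intro!: bdd_belowI[of _ 0])
  show "(h \<longlongrightarrow> ?L) at_top"
  proof (rule order_tendstoI)
    fix y assume "y < ?L"
    then have "\<forall>t\<ge>0. y < h t"
      using bdd by (meson atLeast_iff cInf_lower image_eqI less_le_trans)
    then show "eventually (\<lambda>t. y < h t) at_top"
      unfolding eventually_at_top_linorder by blast
  next
    fix y assume "?L < y"
    then obtain t0 where "t0 \<in> {0..}" "h t0 < y"
      using cInf_lessD[of "h ` {0..}" y] by auto
    then have "\<forall>t\<ge>t0. h t < y"
      using antimono by (meson atLeast_iff le_less_trans)
    then show "eventually (\<lambda>t. h t < y) at_top"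
      unfolding eventually_at_top_linorder by blast
  qed
qed

locale jump_generator =
  fixes S :: "conf set" and Q :: "(conf \<Rightarrow> real) \<Rightarrow> conf \<Rightarrow> real"
    and P :: "conf \<Rightarrow> 'p set" and w :: "conf \<Rightarrow> 'p \<Rightarrow> real" and T :: "conf \<Rightarrow> 'p \<Rightarrow> conf"
  assumes finite_states: "finite S"
    and rate_nonneg: "\<eta> \<in> S \<Longrightarrow> p \<in> P \<eta> \<Longrightarrow> 0 \<le> w \<eta> p"
    and jump_closed: "\<eta> \<in> S \<Longrightarrow> p \<in> P \<eta> \<Longrightarrow> w \<eta> p \<noteq> 0 \<Longrightarrow> T \<eta> p \<in> S"
    and generator_eq: "\<eta> \<in> S \<Longrightarrow> Q g \<eta> = (\<Sum>p\<in>P \<eta>. w \<eta> p * (g (T \<eta> p) - g \<eta>))"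
begin

lemma generator_cong: "\<eta> \<in> S \<Longrightarrow> \<forall>x\<in>S. g x = h x \<Longrightarrow> Q g \<eta> = Q h \<eta>"
  unfolding generator_eq by (intro sum.cong refl) (metis jump_closed mult_zero_left)

lemma funpow_cong: "\<forall>x\<in>S. g x = h x \<Longrightarrow> \<eta> \<in> S \<Longrightarrow> (Q ^^ k) g \<eta> = (Q ^^ k) h \<eta>"
  by (induction k arbitrary: \<eta>) (auto intro: generator_cong)

lemma generator_sum:
  assumes "\<eta> \<in> S" and "finite I"
  shows "Q (\<lambda>x. \<Sum>i\<in>I. a i * h i x) \<eta> = (\<Sum>i\<in>I. a i * Q (h i) \<eta>)"
proof -
  have "Q (\<lambda>x. \<Sum>i\<in>I. a i * h i x) \<eta> =
      (\<Sum>p\<in>P \<eta>. \<Sum>i\<in>I. a i * (w \<eta> p * (h i (T \<eta> p) - h i \<eta>)))"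
    unfolding generator_eq[OF assms(1)]
    by (intro sum.cong refl) (simp add: sum_distrib_left sum_subtractf[symmetric] algebra_simps)
  also have "\<dots> = (\<Sum>i\<in>I. a i * Q (h i) \<eta>)"
    unfolding generator_eq[OF assms(1)] by (subst sum.swap) (simp add: sum_distrib_left)
  finally show ?thesis .
qed

lemma funpow_sum:
  assumes "finite I"
  shows "\<eta> \<in> S \<Longrightarrow> (Q ^^ k) (\<lambda>x. \<Sum>i\<in>I. a i * h i x) \<eta> = (\<Sum>i\<in>I. a i * (Q ^^ k) (h i) \<eta>)"
proof (induction k arbitrary: \<eta>)
  case (Suc k)
  then have "(Q ^^ Suc k) (\<lambda>x. \<Sum>i\<in>I. a i * h i x) \<eta> =
      Q (\<lambda>x. \<Sum>i\<in>I. a i * (Q ^^ k) (h i) x) \<eta>"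
    by (simp add: generator_cong)
  also have "\<dots> = (\<Sum>i\<in>I. a i * (Q ^^ Suc k) (h i) \<eta>)"
    using generator_sum[OF Suc.prems assms] by simp
  finally show ?case .
qed simp

definition total_rate :: real where
  "total_rate = (\<Sum>\<eta>\<in>S. \<Sum>p\<in>P \<eta>. w \<eta> p)"

lemma total_rate_nonneg: "0 \<le> total_rate"
  unfolding total_rate_def by (intro sum_nonneg) (auto intro: rate_nonneg)

lemma exit_rate_le_total_rate: "\<eta> \<in> S \<Longrightarrow> (\<Sum>p\<in>P \<eta>. w \<eta> p) \<le> total_rate"
  unfolding total_rate_def
  by (rule member_le_sum[of \<eta> S "\<lambda>\<eta>. \<Sum>p\<in>P \<eta>. w \<eta> p"]) (auto intro: sum_nonneg rate_nonneg finite_states)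

lemma abs_le_sum_abs: "\<forall>x\<in>S. \<bar>g x\<bar> \<le> (\<Sum>y\<in>S. \<bar>g y\<bar> :: real)"
  using finite_states by (auto intro: member_le_sum[where f = "\<lambda>y. \<bar>g y\<bar>"])

lemma generator_abs_bound:
  assumes g: "\<forall>x\<in>S. \<bar>g x\<bar> \<le> B"
  shows "\<forall>x\<in>S. \<bar>Q g x\<bar> \<le> 2 * total_rate * B"
proof
  fix \<eta> assume \<eta>: "\<eta> \<in> S"
  have B: "0 \<le> B"
    using g \<eta> by force
  have jump: "\<bar>w \<eta> p * (g (T \<eta> p) - g \<eta>)\<bar> \<le> w \<eta> p * (2 * B)" if p: "p \<in> P \<eta>" for p
  proof (cases "w \<eta> p = 0")
    case False
    then have "\<bar>g (T \<eta> p)\<bar> \<le> B" and "\<bar>g \<eta>\<bar> \<le> B"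
      using g \<eta> jump_closed[OF \<eta> p] by auto
    then have "\<bar>g (T \<eta> p) - g \<eta>\<bar> \<le> 2 * B"
      by linarith
    then show ?thesis
      using rate_nonneg[OF \<eta> p] by (simp add: abs_mult mult_left_mono)
  qed simp
  have "\<bar>Q g \<eta>\<bar> \<le> (\<Sum>p\<in>P \<eta>. \<bar>w \<eta> p * (g (T \<eta> p) - g \<eta>)\<bar>)"
    unfolding generator_eq[OF \<eta>] by (rule sum_abs)
  also have "\<dots> \<le> (\<Sum>p\<in>P \<eta>. w \<eta> p) * (2 * B)"
    unfolding sum_distrib_right by (intro sum_mono jump)
  also have "\<dots> \<le> total_rate * (2 * B)"
    using exit_rate_le_total_rate[OF \<eta>] B by (simp add: mult_right_mono)
  finally show "\<bar>Q g \<eta>\<bar> \<le> 2 * total_rate * B"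
    by simp
qed

lemma summable_semigroup_series_abs:
  assumes "\<eta> \<in> S"
  shows "summable (\<lambda>k. \<bar>t ^ k / fact k * (Q ^^ k) g \<eta>\<bar>)"
proof (rule summable_exp_series_abs)
  show "\<bar>(Q ^^ k) g \<eta>\<bar> \<le> (2 * total_rate) ^ k * (\<Sum>y\<in>S. \<bar>g y\<bar>)" for k
    using funpow_abs_bound[OF generator_abs_bound abs_le_sum_abs] assms by (simp add: mult.assoc)
qed

lemma summable_semigroup_series: "\<eta> \<in> S \<Longrightarrow> summable (\<lambda>k. t ^ k / fact k * (Q ^^ k) g \<eta>)"
  by (rule summable_rabs_cancel) (rule summable_semigroup_series_abs)

lemma semigroup_cong: "\<eta> \<in> S \<Longrightarrow> \<forall>x\<in>S. g x = h x \<Longrightarrow> semigroup Q t g \<eta> = semigroup Q t h \<eta>"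
  unfolding semigroup_def by (subst funpow_cong[of g h]) auto

lemma semigroup_sum:
  assumes \<eta>: "\<eta> \<in> S" and I: "finite I"
  shows "semigroup Q t (\<lambda>x. \<Sum>i\<in>I. a i * h i x) \<eta> = (\<Sum>i\<in>I. a i * semigroup Q t (h i) \<eta>)"
proof -
  have "semigroup Q t (\<lambda>x. \<Sum>i\<in>I. a i * h i x) \<eta> =
      (\<Sum>k. \<Sum>i\<in>I. a i * (t ^ k / fact k * (Q ^^ k) (h i) \<eta>))"
    unfolding semigroup_def funpow_sum[OF I \<eta>] by (simp add: sum_distrib_left algebra_simps)
  also have "\<dots> = (\<Sum>i\<in>I. \<Sum>k. a i * (t ^ k / fact k * (Q ^^ k) (h i) \<eta>))"
    by (rule suminf_sum) (intro summable_mult summable_semigroup_series[OF \<eta>])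
  also have "\<dots> = (\<Sum>i\<in>I. a i * semigroup Q t (h i) \<eta>)"
    unfolding semigroup_def by (intro sum.cong refl suminf_mult summable_semigroup_series[OF \<eta>])
  finally show ?thesis .
qed

lemma semigroup_uminus: "\<eta> \<in> S \<Longrightarrow> semigroup Q t (\<lambda>x. - f x) \<eta> = - semigroup Q t f \<eta>"
  using semigroup_sum[where I = "{()}" and a = "\<lambda>_. -1" and h = "\<lambda>_. f"] by simp

lemma has_real_derivative_semigroup:
  assumes "\<eta> \<in> S"
  shows "((\<lambda>t. semigroup Q t g \<eta>) has_real_derivative semigroup Q t (Q g) \<eta>) (at t)"
proof -
  define a where "a = (\<lambda>n. (Q ^^ n) g \<eta> / fact n)"
  have series: "(\<lambda>t. semigroup Q t g \<eta>) = (\<lambda>t. \<Sum>n. a n * t ^ n)"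
    unfolding semigroup_def a_def by (simp add: field_simps)
  have "diffs a n * t ^ n = t ^ n / fact n * (Q ^^ n) (Q g) \<eta>" for n
  proof -
    have "real (Suc n) * ((Q ^^ Suc n) g \<eta> / fact (Suc n)) = (Q ^^ Suc n) g \<eta> / fact n"
      by (simp only: fact_Suc) (simp del: of_nat_Suc)
    then show ?thesis
      unfolding diffs_def a_def by (simp add: funpow_Suc_right del: funpow.simps)
  qed
  then have "(\<Sum>n. diffs a n * t ^ n) = semigroup Q t (Q g) \<eta>"
    unfolding semigroup_def by simp
  moreover have "((\<lambda>t. \<Sum>n. a n * t ^ n) has_real_derivative (\<Sum>n. diffs a n * t ^ n)) (at t)"
    using summable_semigroup_series[OF assms]
    by (intro termdiffs_strong_converges_everywhere) (simp add: a_def field_simps)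
  ultimately show ?thesis
    unfolding series by simp
qed

definition uniformized :: "(conf \<Rightarrow> real) \<Rightarrow> conf \<Rightarrow> real" where
  "uniformized g = (\<lambda>x. Q g x + total_rate * g x)"

lemma uniformized_nonneg:
  assumes g: "\<forall>x\<in>S. 0 \<le> g x" and \<eta>: "\<eta> \<in> S"
  shows "0 \<le> uniformized g \<eta>"
proof -
  have jump: "0 \<le> w \<eta> p * g (T \<eta> p)" if p: "p \<in> P \<eta>" for p
    using rate_nonneg[OF \<eta> p] jump_closed[OF \<eta> p] g by (cases "w \<eta> p = 0") auto
  have "uniformized g \<eta> =
      (\<Sum>p\<in>P \<eta>. w \<eta> p * g (T \<eta> p)) + (total_rate - (\<Sum>p\<in>P \<eta>. w \<eta> p)) * g \<eta>"
    unfolding uniformized_def generator_eq[OF \<eta>]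
    by (simp add: right_diff_distrib sum_subtractf sum_distrib_right left_diff_distrib)
  also have "\<dots> \<ge> 0"
    using exit_rate_le_total_rate[OF \<eta>] g \<eta> by (intro add_nonneg_nonneg sum_nonneg jump) auto
  finally show ?thesis .
qed

lemma funpow_uniformized_nonneg: "\<forall>x\<in>S. 0 \<le> g x \<Longrightarrow> \<eta> \<in> S \<Longrightarrow> 0 \<le> (uniformized ^^ j) g \<eta>"
  by (induction j arbitrary: \<eta>) (auto intro: uniformized_nonneg)

lemma uniformized_abs_bound:
  assumes g: "\<forall>x\<in>S. \<bar>g x\<bar> \<le> B"
  shows "\<forall>x\<in>S. \<bar>uniformized g x\<bar> \<le> 3 * total_rate * B"
proof
  fix x assume x: "x \<in> S"
  have "\<bar>Q g x\<bar> \<le> 2 * total_rate * B"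
    using generator_abs_bound[OF g] x by blast
  moreover have "\<bar>total_rate * g x\<bar> \<le> total_rate * B"
    using g x total_rate_nonneg by (simp add: abs_mult mult_left_mono)
  ultimately show "\<bar>uniformized g x\<bar> \<le> 3 * total_rate * B"
    unfolding uniformized_def by linarith
qed

lemma funpow_eq_binomial_uniformized:
  "\<eta> \<in> S \<Longrightarrow>
    (Q ^^ k) g \<eta> = (\<Sum>j\<le>k. real (k choose j) * (- total_rate) ^ (k - j) * (uniformized ^^ j) g \<eta>)"
proof (induction k arbitrary: \<eta>)
  case (Suc k)
  let ?c = "\<lambda>j. real (k choose j) * (- total_rate) ^ (k - j)"
  have "(Q ^^ Suc k) g \<eta> = Q (\<lambda>x. \<Sum>j\<le>k. ?c j * (uniformized ^^ j) g x) \<eta>"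
    using Suc by (simp add: generator_cong mult.assoc)
  also have "\<dots> = (\<Sum>j\<le>k. ?c j * Q ((uniformized ^^ j) g) \<eta>)"
    using Suc.prems by (simp add: generator_sum)
  also have "\<dots> = (\<Sum>j\<le>k. ?c j * ((uniformized ^^ Suc j) g \<eta> + (- total_rate) * (uniformized ^^ j) g \<eta>))"
    by (simp add: uniformized_def)
  also have "\<dots> = (\<Sum>j\<le>Suc k. real (Suc k choose j) * (- total_rate) ^ (Suc k - j) * (uniformized ^^ j) g \<eta>)"
    by (rule sum_choose_Suc_recurrence)
  finally show ?case .
qed simp

lemma summable_uniformized_series_abs:
  assumes "\<eta> \<in> S"
  shows "summable (\<lambda>k. \<bar>t ^ k / fact k * (uniformized ^^ k) g \<eta>\<bar>)"
proof (rule summable_exp_series_abs)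
  show "\<bar>(uniformized ^^ k) g \<eta>\<bar> \<le> (3 * total_rate) ^ k * (\<Sum>y\<in>S. \<bar>g y\<bar>)" for k
    using funpow_abs_bound[OF uniformized_abs_bound abs_le_sum_abs] assms by (simp add: mult.assoc)
qed

text \<open>Uniformization: \<open>exp (t Q) = exp (- W t) exp (t (Q + W))\<close> for the total rate \<open>W\<close>,
  and \<open>Q + W\<close> preserves nonnegativity on \<open>S\<close>.\<close>

lemma semigroup_eq_uniformized:
  assumes \<eta>: "\<eta> \<in> S"
  shows "semigroup Q t g \<eta> =
    (\<Sum>j. t ^ j / fact j * (uniformized ^^ j) g \<eta>) * exp (- total_rate * t)"
proof -
  define a where "a = (\<lambda>j. t ^ j / fact j * (uniformized ^^ j) g \<eta>)"
  define b where "b = (\<lambda>m. t ^ m / fact m * (- total_rate) ^ m)"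
  have sa: "summable (\<lambda>k. norm (a k))"
    unfolding a_def real_norm_def by (rule summable_uniformized_series_abs[OF \<eta>])
  have sb: "summable (\<lambda>k. norm (b k))"
    unfolding b_def real_norm_def
    by (rule summable_exp_series_abs[where K = "\<bar>total_rate\<bar>" and B = 1]) (simp add: power_abs)
  have "t ^ k / fact k * (Q ^^ k) g \<eta> = (\<Sum>i\<le>k. a i * b (k - i))" for k
  proof -
    have "t ^ k / fact k * (Q ^^ k) g \<eta> =
        (\<Sum>j\<le>k. t ^ k / fact k * real (k choose j) * (- total_rate) ^ (k - j) * (uniformized ^^ j) g \<eta>)"
      using funpow_eq_binomial_uniformized[OF \<eta>] by (simp add: sum_distrib_left mult.assoc)
    also have "\<dots> = (\<Sum>i\<le>k. a i * b (k - i))"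
      unfolding a_def b_def
    proof (intro sum.cong refl)
      fix j assume "j \<in> {..k}"
      then have "t ^ k / fact k * real (k choose j) = t ^ j / fact j * (t ^ (k - j) / fact (k - j))"
        by (intro power_fact_choose) simp
      then show "t ^ k / fact k * real (k choose j) * (- total_rate) ^ (k - j) * (uniformized ^^ j) g \<eta> =
          t ^ j / fact j * (uniformized ^^ j) g \<eta> * (t ^ (k - j) / fact (k - j) * (- total_rate) ^ (k - j))"
        by (simp add: mult_ac)
    qed
    finally show ?thesis .
  qed
  then have "semigroup Q t g \<eta> = (\<Sum>k. a k) * (\<Sum>k. b k)"
    unfolding semigroup_def Cauchy_product[OF sa sb] by simp
  moreover have "(\<Sum>k. b k) = exp (- total_rate * t)"
    unfolding b_def exp_def power_mult_distrib by (simp add: divide_inverse mult_ac scaleR_conv_of_real)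
  ultimately show ?thesis
    unfolding a_def by simp
qed

lemma semigroup_nonneg:
  assumes g: "\<forall>x\<in>S. 0 \<le> g x" and \<eta>: "\<eta> \<in> S" and t: "0 \<le> t"
  shows "0 \<le> semigroup Q t g \<eta>"
proof -
  have "summable (\<lambda>j. t ^ j / fact j * (uniformized ^^ j) g \<eta>)"
    by (rule summable_rabs_cancel) (rule summable_uniformized_series_abs[OF \<eta>])
  then have "0 \<le> (\<Sum>j. t ^ j / fact j * (uniformized ^^ j) g \<eta>)"
    using funpow_uniformized_nonneg[OF g \<eta>] t by (intro suminf_nonneg) auto
  then show ?thesis
    unfolding semigroup_eq_uniformized[OF \<eta>] by simp
qed

lemma generator_nonpos:
  assumes "\<And>\<eta> p. \<eta> \<in> S \<Longrightarrow> p \<in> P \<eta> \<Longrightarrow> w \<eta> p \<noteq> 0 \<Longrightarrow> g (T \<eta> p) \<le> g \<eta>"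
    and \<eta>: "\<eta> \<in> S"
  shows "Q g \<eta> \<le> 0"
  unfolding generator_eq[OF \<eta>]
proof (rule sum_nonpos)
  fix p assume p: "p \<in> P \<eta>"
  show "w \<eta> p * (g (T \<eta> p) - g \<eta>) \<le> 0"
    using assms(1)[OF \<eta> p] rate_nonneg[OF \<eta> p] by (cases "w \<eta> p = 0") (auto intro: mult_nonneg_nonpos)
qed

lemma semigroup_convergent_at_top:
  assumes \<eta>: "\<eta> \<in> S" and g: "\<forall>x\<in>S. 0 \<le> g x" and Qg: "\<forall>x\<in>S. Q g x \<le> 0"
  shows "\<exists>L. ((\<lambda>t. semigroup Q t g \<eta>) \<longlongrightarrow> L) at_top"
proof (rule antimono_nonneg_convergent_at_top)
  fix s t :: real assume s: "0 \<le> s" "s \<le> t"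
  show "semigroup Q t g \<eta> \<le> semigroup Q s g \<eta>"
  proof (rule DERIV_nonpos_imp_nonincreasing[OF s(2)])
    fix x assume x: "s \<le> x" "x \<le> t"
    have "0 \<le> semigroup Q x (\<lambda>y. - Q g y) \<eta>"
      using Qg x s by (intro semigroup_nonneg \<eta>) auto
    then have "semigroup Q x (Q g) \<eta> \<le> 0"
      using semigroup_uminus[OF \<eta>] by simp
    then show "\<exists>y. ((\<lambda>t. semigroup Q t g \<eta>) has_real_derivative y) (at x) \<and> y \<le> 0"
      using has_real_derivative_semigroup[OF \<eta>] by blast
  qed
qed (rule semigroup_nonneg[OF g \<eta>])

lemma generator_eq_jump_rates:
  assumes \<eta>: "\<eta> \<in> S" and U: "finite U" "S \<subseteq> U"
  shows "Q h \<eta> = (\<Sum>\<zeta>\<in>U - {\<eta>}. Q (\<lambda>\<xi>. if \<xi> = \<zeta> then 1 else 0) \<eta> * (h \<zeta> - h \<eta>))"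
proof -
  have rate: "Q (\<lambda>\<xi>. if \<xi> = \<zeta> then 1 else 0) \<eta> = (\<Sum>p\<in>P \<eta>. w \<eta> p * (if T \<eta> p = \<zeta> then 1 else 0))"
    if "\<zeta> \<in> U - {\<eta>}" for \<zeta>
    unfolding generator_eq[OF \<eta>] using that by (intro sum.cong refl) auto
  have jump: "(\<Sum>\<zeta>\<in>U - {\<eta>}. w \<eta> p * (if T \<eta> p = \<zeta> then h \<zeta> - h \<eta> else 0)) = w \<eta> p * (h (T \<eta> p) - h \<eta>)"
    if p: "p \<in> P \<eta>" for p
  proof -
    have "(\<Sum>\<zeta>\<in>U - {\<eta>}. w \<eta> p * (if T \<eta> p = \<zeta> then h \<zeta> - h \<eta> else 0)) =
        w \<eta> p * (if T \<eta> p \<in> U - {\<eta>} then h (T \<eta> p) - h \<eta> else 0)"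
      unfolding sum_distrib_left[symmetric] using U(1) by simp
    then show ?thesis
      using U(2) jump_closed[OF \<eta> p] by (cases "w \<eta> p = 0") auto
  qed
  have "(\<Sum>\<zeta>\<in>U - {\<eta>}. Q (\<lambda>\<xi>. if \<xi> = \<zeta> then 1 else 0) \<eta> * (h \<zeta> - h \<eta>)) =
      (\<Sum>\<zeta>\<in>U - {\<eta>}. \<Sum>p\<in>P \<eta>. w \<eta> p * (if T \<eta> p = \<zeta> then h \<zeta> - h \<eta> else 0))"
    by (intro sum.cong refl) (simp add: rate sum_distrib_right, intro sum.cong refl, simp)
  also have "\<dots> = (\<Sum>p\<in>P \<eta>. w \<eta> p * (h (T \<eta> p) - h \<eta>))"
    by (subst sum.swap) (simp add: jump)
  finally show ?thesis
    unfolding generator_eq[OF \<eta>] by simp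
qed

lemma semigroup_eq_if_generator_eq:
  assumes eq: "\<And>g \<eta>. \<eta> \<in> S \<Longrightarrow> Q g \<eta> = Q' g \<eta>" and \<eta>: "\<eta> \<in> S"
  shows "semigroup Q t g \<eta> = semigroup Q' t g \<eta>"
proof -
  have "(Q ^^ k) g \<eta> = (Q' ^^ k) g \<eta>" if "\<eta> \<in> S" for k \<eta>
    using that
  proof (induction k arbitrary: \<eta>)
    case (Suc k)
    then have "Q ((Q ^^ k) g) \<eta> = Q ((Q' ^^ k) g) \<eta>"
      by (intro generator_cong) auto
    then show ?case
      using eq[OF Suc.prems] by simp
  qed simp
  then show ?thesis
    unfolding semigroup_def using \<eta> by simp
qed

end

section \<open>Particle configurations\<close>

definition particles :: "nat \<Rightarrow> conf \<Rightarrow> nat" where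
  "particles N \<eta> = (\<Sum>x\<in>{0..N+1}. \<eta> x)"

definition confs :: "nat \<Rightarrow> nat \<Rightarrow> conf set" where
  "confs N n = {\<eta>. (\<forall>y. y \<notin> {0..N+1} \<longrightarrow> \<eta> y = 0) \<and> particles N \<eta> = n}"

lemma sum_fun_upd_nat:
  fixes f :: "'a \<Rightarrow> nat"
  assumes "finite A" "x \<in> A"
  shows "sum (f(x := v)) A + f x = sum f A + v"
proof -
  have "sum (f(x := v)) (A - {x}) = sum f (A - {x})"
    by (intro sum.cong) auto
  then show ?thesis
    using sum.remove[OF assms, of f] sum.remove[OF assms, of "f(x := v)"] by simp
qed

lemma le_particles: "x \<in> {0..N+1} \<Longrightarrow> \<eta> x \<le> particles N \<eta>"
  unfolding particles_def by (rule member_le_sum) auto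

lemma particles_remove:
  "x \<in> {0..N+1} \<Longrightarrow> 0 < \<eta> x \<Longrightarrow> particles N (\<eta>(x := \<eta> x - 1)) = particles N \<eta> - 1"
  unfolding particles_def using sum_fun_upd_nat[of "{0..N+1}" x \<eta> "\<eta> x - 1"] by simp

lemma particles_add:
  "y \<in> {0..N+1} \<Longrightarrow> particles N (\<eta>(y := \<eta> y + 1)) = particles N \<eta> + 1"
  unfolding particles_def using sum_fun_upd_nat[of "{0..N+1}" y \<eta> "\<eta> y + 1"] by simp

lemma finite_confs: "finite (confs N n)"
proof (rule finite_subset)
  show "confs N n \<subseteq> {\<eta>. \<forall>x. (x \<in> {0..N+1} \<longrightarrow> \<eta> x \<in> {0..n}) \<and> (x \<notin> {0..N+1} \<longrightarrow> \<eta> x = 0)}"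
    using le_particles unfolding confs_def by fastforce
  show "finite {\<eta>::conf. \<forall>x. (x \<in> {0..N+1} \<longrightarrow> \<eta> x \<in> {0..n}) \<and> (x \<notin> {0..N+1} \<longrightarrow> \<eta> x = 0)}"
    by (rule finite_set_of_finite_funs) auto
qed

lemma remove_in_confs:
  assumes "\<eta> \<in> confs N n" "x \<in> {0..N+1}" "0 < \<eta> x"
  shows "\<eta>(x := \<eta> x - 1) \<in> confs N (n - 1)"
  using assms particles_remove[of x N \<eta>] by (auto simp: confs_def)

lemma move_in_confs:
  assumes \<eta>: "\<eta> \<in> confs N n" and x: "x \<in> {0..N+1}" and y: "y \<in> {0..N+1}"
    and "x \<noteq> y" and "0 < \<eta> x"
  shows "\<eta>(x := \<eta> x - 1, y := \<eta> y + 1) \<in> confs N n"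
proof -
  let ?\<eta>' = "\<eta>(x := \<eta> x - 1)"
  have "\<eta>(x := \<eta> x - 1, y := \<eta> y + 1) = ?\<eta>'(y := ?\<eta>' y + 1)"
    using \<open>x \<noteq> y\<close> by simp
  moreover have "1 \<le> n"
    using le_particles[OF x, of \<eta>] \<eta> \<open>0 < \<eta> x\<close> by (simp add: confs_def)
  ultimately show ?thesis
    using remove_in_confs[OF \<eta> x \<open>0 < \<eta> x\<close>] particles_add[OF y, of ?\<eta>'] y by (auto simp: confs_def)
qed

lemma confs_0: "confs N 0 = {\<lambda>_. 0}"
proof -
  have "\<eta> = (\<lambda>_. 0)" if "\<eta> \<in> confs N 0" for \<eta>
  proof
    fix x show "\<eta> x = 0"
      using that le_particles[of x N \<eta>] by (cases "x \<in> {0..N+1}") (auto simp: confs_def)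
  qed
  then show ?thesis
    by (auto simp: confs_def particles_def)
qed

lemma delta_inj: "delta a = delta b \<Longrightarrow> a = b"
  unfolding delta_def by (metis zero_neq_one)

lemma delta_in_confs: "a \<in> {0..N+1} \<Longrightarrow> delta a \<in> confs N 1"
  unfolding confs_def particles_def delta_def by auto

lemma confs_1: "confs N 1 = delta ` {0..N+1}"
proof
  show "confs N 1 \<subseteq> delta ` {0..N+1}"
  proof
    fix \<eta> assume \<eta>: "\<eta> \<in> confs N 1"
    then have total: "(\<Sum>y\<in>{0..N+1}. \<eta> y) = 1"
      by (simp add: confs_def particles_def)
    then obtain a where a: "a \<in> {0..N+1}" "\<eta> a \<noteq> 0"
      by (metis one_neq_zero sum.neutral)
    have "\<eta> a + (\<Sum>y\<in>{0..N+1} - {a}. \<eta> y) = 1"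
      using total sum.remove[OF finite_atLeastAtMost a(1), of \<eta>] by linarith
    then have "\<eta> a = 1" and "(\<Sum>y\<in>{0..N+1} - {a}. \<eta> y) = 0"
      using a(2) by linarith+
    then have "\<eta> a = 1" and "\<forall>y\<in>{0..N+1} - {a}. \<eta> y = 0"
      by simp_all
    moreover have "\<eta> x = 0" if "x \<notin> {0..N+1}" for x
      using \<eta> that by (simp add: confs_def)
    ultimately have "\<eta> = delta a"
      unfolding delta_def fun_eq_iff by (metis Diff_iff singletonD)
    then show "\<eta> \<in> delta ` {0..N+1}"
      using a(1) by blast
  qed
qed (use delta_in_confs in blast)

lemma phi_Cons: "phi (a # ys) = (\<lambda>u. phi ys u + (if a = u then 1 else 0))"
  unfolding phi_def by auto

lemma phi_in_confs: "set ys \<subseteq> {0..N+1} \<Longrightarrow> phi ys \<in> confs N (length ys)"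
proof (induction ys)
  case Nil
  then show ?case
    by (simp add: confs_def particles_def phi_def)
next
  case (Cons a ys)
  have "particles N (phi (a # ys)) = particles N (phi ys) + (\<Sum>u\<in>{0..N+1}. if a = u then 1 else 0)"
    unfolding particles_def phi_Cons by (simp add: sum.distrib)
  then show ?case
    using Cons by (auto simp: confs_def phi_Cons)
qed

lemma phi_nths_eq_card:
  assumes "S \<subseteq> {..<length xs}"
  shows "phi (nths xs S) u = card {i\<in>S. xs ! i = u}"
proof -
  have "phi (nths xs S) u = length (filter (\<lambda>p. snd p \<in> S \<and> fst p = u) (zip xs [0..<length xs]))"
    unfolding phi_def nths_def by (simp add: filter_map filter_filter comp_def)
  also have "\<dots> = card {i\<in>S. xs ! i = u}"
    unfolding length_filter_conv_card using assms by (intro arg_cong[where f = card]) auto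
  finally show ?thesis .
qed

lemma phi_nths_remove:
  assumes S: "S \<subseteq> {..<length xs}" and i: "i \<in> S"
  shows "phi (nths xs (S - {i})) = (phi (nths xs S))(xs ! i := phi (nths xs S) (xs ! i) - 1)"
proof
  fix v
  have S': "S - {i} \<subseteq> {..<length xs}"
    using S by auto
  show "phi (nths xs (S - {i})) v = ((phi (nths xs S))(xs ! i := phi (nths xs S) (xs ! i) - 1)) v"
  proof (cases "v = xs ! i")
    case True
    have "{j \<in> S - {i}. xs ! j = v} = {j \<in> S. xs ! j = v} - {i}"
      by auto
    moreover have "card ({j \<in> S. xs ! j = v} - {i}) = card {j \<in> S. xs ! j = v} - 1"
      using S i True finite_subset by (intro card_Diff_singleton) auto
    ultimately show ?thesis
      using True unfolding phi_nths_eq_card[OF S'] phi_nths_eq_card[OF S] by simp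
  next
    case False
    then have "{j \<in> S - {i}. xs ! j = v} = {j \<in> S. xs ! j = v}"
      by auto
    then show ?thesis
      using False unfolding phi_nths_eq_card[OF S'] phi_nths_eq_card[OF S] by simp
  qed
qed

lemma nth_in_sites: "set xs \<subseteq> A \<Longrightarrow> S \<subseteq> {..<length xs} \<Longrightarrow> i \<in> S \<Longrightarrow> xs ! i \<in> A"
  by (meson lessThan_iff nth_mem subsetD)

section \<open>The annihilation operator\<close>

lemma annihA_sum:
  assumes "finite I"
  shows "annihA N (\<lambda>\<zeta>. \<Sum>i\<in>I. a i * h i \<zeta>) \<eta> = (\<Sum>i\<in>I. a i * annihA N (h i) \<eta>)"
  unfolding annihA_def sum_distrib_left by (subst sum.swap) (simp add: mult_ac)

text \<open>Comparing \<open>J (A f)\<close> and \<open>A (J f)\<close> term by term for the single jump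
  \<open>J f \<eta> = \<eta> x * (f (\<eta> - \<delta>\<^sub>x + \<delta>\<^sub>y) - f \<eta>)\<close>: only the terms \<open>u = y\<close> and \<open>u = x\<close>
  differ, by opposite amounts.\<close>

lemma annihA_jump_term:
  fixes \<eta> :: conf and f :: "conf \<Rightarrow> real" and x y u :: nat
  defines "move \<equiv> \<lambda>\<zeta>::conf. \<zeta>(x := \<zeta> x - 1, y := \<zeta> y + 1)"
    and "remove \<equiv> \<lambda>u (\<zeta>::conf). \<zeta>(u := \<zeta> u - 1)"
  assumes "x \<noteq> y" and "0 < \<eta> x"
  shows "real (\<eta> x) * (real (move \<eta> u) * f (remove u (move \<eta>)) - real (\<eta> u) * f (remove u \<eta>))
       - real (\<eta> u) * real (remove u \<eta> x) * (f (move (remove u \<eta>)) - f (remove u \<eta>))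
     = (if u = y then real (\<eta> x) * f (remove x \<eta>)
        else if u = x then - real (\<eta> x) * f (remove x \<eta>) else 0)"
proof -
  consider "u = y" | "u = x" | "u \<noteq> x" "u \<noteq> y"
    by blast
  then show ?thesis
  proof cases
    case 1
    have "remove y (move \<eta>) = remove x \<eta>"
      using \<open>x \<noteq> y\<close> by (auto simp: move_def remove_def fun_eq_iff)
    moreover have "move (remove y \<eta>) = remove x \<eta>" if "\<eta> y \<noteq> 0"
      using \<open>x \<noteq> y\<close> that by (auto simp: move_def remove_def fun_eq_iff)
    ultimately show ?thesis
      using 1 \<open>x \<noteq> y\<close> by (cases "\<eta> y = 0") (simp_all add: move_def remove_def algebra_simps)
  next
    case 2
    have "move (remove x \<eta>) = remove x (move \<eta>)"
      using \<open>x \<noteq> y\<close> by (auto simp: move_def remove_def fun_eq_iff)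
    moreover have "real (\<eta> x - 1) = real (\<eta> x) - 1"
      using \<open>0 < \<eta> x\<close> by (simp add: of_nat_diff)
    ultimately show ?thesis
      using 2 \<open>x \<noteq> y\<close> by (simp add: move_def remove_def algebra_simps)
  next
    case 3
    have "move (remove u \<eta>) = remove u (move \<eta>)"
      using 3 \<open>x \<noteq> y\<close> by (auto simp: move_def remove_def fun_eq_iff)
    then show ?thesis
      using 3 \<open>x \<noteq> y\<close> by (simp add: move_def remove_def algebra_simps)
  qed
qed

lemma annihA_jump_commute:
  fixes \<eta> :: conf and f :: "conf \<Rightarrow> real"
  assumes x: "x \<in> {0..N+1}" and y: "y \<in> {0..N+1}" and "x \<noteq> y"
  shows "real (\<eta> x) * (annihA N f (\<eta>(x := \<eta> x - 1, y := \<eta> y + 1)) - annihA N f \<eta>) =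
    annihA N (\<lambda>\<zeta>. real (\<zeta> x) * (f (\<zeta>(x := \<zeta> x - 1, y := \<zeta> y + 1)) - f \<zeta>)) \<eta>"
proof (cases "\<eta> x = 0")
  case True
  then have "(\<eta>(u := \<eta> u - 1)) x = 0" for u
    by (cases "u = x") simp_all
  then show ?thesis
    using True by (simp add: annihA_def)
next
  case False
  let ?a = "real (\<eta> x) * f (\<eta>(x := \<eta> x - 1))"
  have "real (\<eta> x) * (annihA N f (\<eta>(x := \<eta> x - 1, y := \<eta> y + 1)) - annihA N f \<eta>) -
      annihA N (\<lambda>\<zeta>. real (\<zeta> x) * (f (\<zeta>(x := \<zeta> x - 1, y := \<zeta> y + 1)) - f \<zeta>)) \<eta> =
      (\<Sum>u\<in>{0..N+1}. if u = y then ?a else if u = x then - ?a else 0)"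
    unfolding annihA_def sum_distrib_left sum_subtractf[symmetric]
    using annihA_jump_term[OF \<open>x \<noteq> y\<close>, of \<eta>] False by (intro sum.cong refl) (simp add: mult_ac)
  also have "\<dots> = (\<Sum>u\<in>{0..N+1}. if u = y then ?a else 0) + (\<Sum>u\<in>{0..N+1}. if u = x then - ?a else 0)"
    unfolding sum.distrib[symmetric] using \<open>x \<noteq> y\<close> by (intro sum.cong) auto
  also have "\<dots> = 0"
    using x y by simp
  finally show ?thesis
    by simp
qed

lemma genIRW_annihA_commute: "genIRW N Lam c r (annihA N f) \<eta> = annihA N (genIRW N Lam c r f) \<eta>"
proof -
  define D where "D = Sigma {0..N+1} (\<lambda>x. {0..N+1} - {x})"
  define jump where "jump = (\<lambda>(x, y) g (\<zeta>::conf). real (\<zeta> x) * (g (\<zeta>(x := \<zeta> x - 1, y := \<zeta> y + 1)) - g \<zeta>))"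
  have gen: "genIRW N Lam c r g \<zeta> = (\<Sum>p\<in>D. case_prod (rw_rate N Lam c r) p * jump p g \<zeta>)" for g \<zeta>
    unfolding genIRW_def D_def jump_def
    by (subst sum.Sigma) (auto intro!: sum.cong simp: mult_ac split: prod.split)
  have "genIRW N Lam c r (annihA N f) \<eta> = (\<Sum>p\<in>D. case_prod (rw_rate N Lam c r) p * annihA N (jump p f) \<eta>)"
    unfolding gen using annihA_jump_commute by (intro sum.cong refl) (auto simp: D_def jump_def)
  also have "\<dots> = annihA N (genIRW N Lam c r f) \<eta>"
    unfolding gen by (rule annihA_sum[symmetric]) (simp add: D_def)
  finally show ?thesis .
qed

text \<open>Since \<open>0 ^ 0 = 1\<close>, \<open>power_absorbed 0\<close> is the indicator that nothing has been absorbed at \<open>0\<close>.\<close>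

definition power_absorbed :: "real \<Rightarrow> conf \<Rightarrow> real" where
  "power_absorbed z \<zeta> = z ^ \<zeta> 0"

lemma power_eq_binomial_sum:
  fixes z :: "'a::comm_ring_1"
  assumes "a \<le> n"
  shows "z ^ a = (\<Sum>k\<le>n. z ^ (n - k) * (1 - z) ^ k * of_nat (n - a choose k))"
proof -
  have "z ^ a = z ^ a * ((1 - z) + z) ^ (n - a)"
    by simp
  also have "\<dots> = (\<Sum>k\<le>n - a. z ^ (n - k) * (1 - z) ^ k * of_nat (n - a choose k))"
    unfolding binomial_ring sum_distrib_left
  proof (intro sum.cong refl)
    fix k assume "k \<in> {..n - a}"
    then have "a + (n - a - k) = n - k"
      using assms by simp
    then have "z ^ (n - k) = z ^ a * z ^ (n - a - k)"
      by (metis power_add)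
    then show "z ^ a * (of_nat (n - a choose k) * (1 - z) ^ k * z ^ (n - a - k)) =
        z ^ (n - k) * (1 - z) ^ k * of_nat (n - a choose k)"
      by (simp only: mult_ac)
  qed
  also have "\<dots> = (\<Sum>k\<le>n. z ^ (n - k) * (1 - z) ^ k * of_nat (n - a choose k))"
  proof (rule sum.mono_neutral_left)
    show "\<forall>k\<in>{..n} - {..n - a}. z ^ (n - k) * (1 - z) ^ k * of_nat (n - a choose k) = 0"
      by (simp add: binomial_eq_0)
  qed auto
  finally show ?thesis .
qed

lemma choose_absorption_sum:
  assumes "a \<le> n"
  shows "a * (n - a choose k) + (n - a) * (n - a - 1 choose k) = (n - k) * (n - a choose k)"
proof (cases "k \<le> n - a")
  case True
  then have "a + (n - a - k) = n - k"
    using assms by simp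
  then show ?thesis
    using binomial_absorb_comp[of "n - a" k] by (metis add_mult_distrib)
next
  case False
  then show ?thesis
    by (simp add: binomial_eq_0)
qed

lemma sum_remove_particle_choose:
  assumes \<eta>: "\<eta> \<in> confs N n"
  shows "(\<Sum>x\<in>{0..N+1}. real (\<eta> x) * real (n - 1 - (\<eta>(x := \<eta> x - 1)) 0 choose k)) =
    real (n - k) * real (n - \<eta> 0 choose k)"
proof -
  define a where "a = \<eta> 0"
  have "a \<le> n"
    using le_particles[of 0 N \<eta>] \<eta> by (simp add: a_def confs_def)
  have at_0: "real (\<eta> 0) * real (n - 1 - (\<eta> 0 - 1) choose k) = real (a * (n - a choose k))"
    using \<open>a \<le> n\<close> by (cases "a = 0") (simp_all add: a_def)
  have others: "(\<Sum>x\<in>{0..N+1} - {0}. real (\<eta> x) * real (n - 1 - (\<eta>(x := \<eta> x - 1)) 0 choose k)) =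
      real ((n - a) * (n - a - 1 choose k))"
  proof -
    have "(\<Sum>x\<in>{0..N+1} - {0}. \<eta> x) = n - a"
      using \<eta> sum.remove[of "{0..N+1}" 0 \<eta>] by (simp add: confs_def particles_def a_def)
    then have "(\<Sum>x\<in>{0..N+1} - {0}. real (\<eta> x)) = real (n - a)"
      by (metis of_nat_sum)
    moreover have "(\<Sum>x\<in>{0..N+1} - {0}. real (\<eta> x) * real (n - 1 - (\<eta>(x := \<eta> x - 1)) 0 choose k)) =
        (\<Sum>x\<in>{0..N+1} - {0}. real (\<eta> x)) * real (n - a - 1 choose k)"
      unfolding sum_distrib_right by (intro sum.cong) (auto simp: a_def)
    ultimately show ?thesis
      by simp
  qed
  have "(\<Sum>x\<in>{0..N+1}. real (\<eta> x) * real (n - 1 - (\<eta>(x := \<eta> x - 1)) 0 choose k)) =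
      real (\<eta> 0) * real (n - 1 - (\<eta> 0 - 1) choose k) +
      (\<Sum>x\<in>{0..N+1} - {0}. real (\<eta> x) * real (n - 1 - (\<eta>(x := \<eta> x - 1)) 0 choose k))"
    by (subst sum.remove[of _ 0]) simp_all
  also have "\<dots> = real (a * (n - a choose k) + (n - a) * (n - a - 1 choose k))"
    unfolding at_0 others by simp
  also have "\<dots> = real (n - k) * real (n - \<eta> 0 choose k)"
    using choose_absorption_sum[OF \<open>a \<le> n\<close>] by (simp add: a_def)
  finally show ?thesis .
qed

text \<open>\<open>A\<^sup>j\<close> removes \<open>j\<close> particles in all orders; a removal survives \<open>power_absorbed 0\<close>
  iff it takes every particle at \<open>0\<close>, i.e. iff the \<open>k\<close> remaining particles all lie away from \<open>0\<close>.\<close>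

lemma funpow_annihA_power_absorbed:
  "\<eta> \<in> confs N (j + k) \<Longrightarrow>
    (annihA N ^^ j) (power_absorbed 0) \<eta> = fact j * real (j + k - \<eta> 0 choose k)"
proof (induction j arbitrary: \<eta>)
  case 0
  then have "\<eta> 0 \<le> k"
    using le_particles[of 0 N \<eta>] by (simp add: confs_def)
  then show ?case
    by (cases "\<eta> 0 = 0") (simp_all add: power_absorbed_def binomial_eq_0)
next
  case (Suc j)
  have step: "real (\<eta> x) * (annihA N ^^ j) (power_absorbed 0) (\<eta>(x := \<eta> x - 1)) =
      fact j * (real (\<eta> x) * real (Suc j + k - 1 - (\<eta>(x := \<eta> x - 1)) 0 choose k))"
    if x: "x \<in> {0..N+1}" for x
  proof (cases "\<eta> x = 0")
    case False
    then have "\<eta>(x := \<eta> x - 1) \<in> confs N (j + k)"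
      using remove_in_confs[OF Suc.prems x] by simp
    then have "(annihA N ^^ j) (power_absorbed 0) (\<eta>(x := \<eta> x - 1)) =
        fact j * real (j + k - (\<eta>(x := \<eta> x - 1)) 0 choose k)"
      by (rule Suc.IH)
    then show ?thesis
      by simp
  qed simp
  have "(annihA N ^^ Suc j) (power_absorbed 0) \<eta> =
      (\<Sum>x\<in>{0..N+1}. real (\<eta> x) * (annihA N ^^ j) (power_absorbed 0) (\<eta>(x := \<eta> x - 1)))"
    by (simp add: annihA_def)
  also have "\<dots> =
      fact j * (\<Sum>x\<in>{0..N+1}. real (\<eta> x) * real (Suc j + k - 1 - (\<eta>(x := \<eta> x - 1)) 0 choose k))"
    unfolding sum_distrib_left by (rule sum.cong[OF refl]) (rule step)
  also have "\<dots> = fact (Suc j) * real (Suc j + k - \<eta> 0 choose k)"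
    unfolding sum_remove_particle_choose[OF Suc.prems] by simp
  finally show ?case .
qed

lemma power_absorbed_eq_annihA_sum:
  assumes "\<eta> \<in> confs N n"
  shows "power_absorbed z \<eta> =
    (\<Sum>k\<le>n. z ^ (n - k) * (1 - z) ^ k / fact (n - k) * (annihA N ^^ (n - k)) (power_absorbed 0) \<eta>)"
proof -
  have "\<eta> 0 \<le> n"
    using le_particles[of 0 N \<eta>] assms by (simp add: confs_def)
  have "(annihA N ^^ (n - k)) (power_absorbed 0) \<eta> = fact (n - k) * real (n - \<eta> 0 choose k)"
    if "k \<le> n" for k
    using funpow_annihA_power_absorbed[of \<eta> N "n - k" k] assms that by simp
  then show ?thesis
    unfolding power_absorbed_def[of z] power_eq_binomial_sum[OF \<open>\<eta> 0 \<le> n\<close>]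
    by (intro sum.cong refl) simp
qed

lemma annihA_phi_nths:
  assumes xs: "set xs \<subseteq> {0..N+1}" and S: "S \<subseteq> {..<length xs}"
  shows "annihA N h (phi (nths xs S)) = (\<Sum>i\<in>S. h (phi (nths xs (S - {i}))))"
proof -
  let ?\<eta> = "phi (nths xs S)"
  have "finite S"
    using S finite_subset by blast
  have "(\<Sum>i\<in>S. h (phi (nths xs (S - {i})))) =
      (\<Sum>u\<in>{0..N+1}. \<Sum>i\<in>{i\<in>S. xs ! i = u}. h (phi (nths xs (S - {i}))))"
    using nth_in_sites[OF xs S] by (intro sum.group[symmetric] \<open>finite S\<close>) auto
  also have "\<dots> = (\<Sum>u\<in>{0..N+1}. real (?\<eta> u) * h (?\<eta>(u := ?\<eta> u - 1)))"
  proof (intro sum.cong refl)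
    fix u
    have "(\<Sum>i\<in>{i\<in>S. xs ! i = u}. h (phi (nths xs (S - {i})))) =
        (\<Sum>i\<in>{i\<in>S. xs ! i = u}. h (?\<eta>(u := ?\<eta> u - 1)))"
      by (intro sum.cong refl) (simp add: phi_nths_remove[OF S])
    then show "(\<Sum>i\<in>{i\<in>S. xs ! i = u}. h (phi (nths xs (S - {i})))) =
        real (?\<eta> u) * h (?\<eta>(u := ?\<eta> u - 1))"
      by (simp add: phi_nths_eq_card[OF S])
  qed
  finally show ?thesis
    unfolding annihA_def by simp
qed

lemma bij_betw_remove_from_subset:
  assumes "finite S0"
  shows "bij_betw (\<lambda>(S, i). (S - {i}, i))
    (SIGMA S:{S. S \<subseteq> S0 \<and> card S = Suc k}. S) (SIGMA T:{T. T \<subseteq> S0 \<and> card T = k}. S0 - T)"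
proof (rule bij_betw_byWitness[where f' = "\<lambda>(T, i). (insert i T, i)"])
  have fin: "finite S" if "S \<subseteq> S0" for S
    using assms that by (rule rev_finite_subset)
  show "(\<lambda>(S, i). (S - {i}, i)) ` (SIGMA S:{S. S \<subseteq> S0 \<and> card S = Suc k}. S) \<subseteq>
      (SIGMA T:{T. T \<subseteq> S0 \<and> card T = k}. S0 - T)"
    using fin by (auto simp: card_Diff_singleton)
  show "(\<lambda>(T, i). (insert i T, i)) ` (SIGMA T:{T. T \<subseteq> S0 \<and> card T = k}. S0 - T) \<subseteq>
      (SIGMA S:{S. S \<subseteq> S0 \<and> card S = Suc k}. S)"
    using fin by auto
qed (auto simp: insert_absorb)

lemma sum_subsets_remove_one:
  fixes g :: "'a set \<Rightarrow> real"
  assumes "finite S0"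
  shows "(\<Sum>S\<in>{S. S \<subseteq> S0 \<and> card S = Suc k}. \<Sum>i\<in>S. g (S - {i})) =
    real (card S0 - k) * (\<Sum>T\<in>{T. T \<subseteq> S0 \<and> card T = k}. g T)"
proof -
  have fin: "finite S" if "S \<subseteq> S0" for S
    using assms that by (rule rev_finite_subset)
  have "(\<Sum>S\<in>{S. S \<subseteq> S0 \<and> card S = Suc k}. \<Sum>i\<in>S. g (S - {i})) =
      (\<Sum>(S, i)\<in>(SIGMA S:{S. S \<subseteq> S0 \<and> card S = Suc k}. S). g (S - {i}))"
    using assms fin by (intro sum.Sigma) auto
  also have "\<dots> = (\<Sum>(T, i)\<in>(SIGMA T:{T. T \<subseteq> S0 \<and> card T = k}. S0 - T). g T)"
    using sum.reindex_bij_betw[OF bij_betw_remove_from_subset[OF assms], of "\<lambda>(T, i). g T"]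
    by (simp add: case_prod_beta)
  also have "\<dots> = (\<Sum>T\<in>{T. T \<subseteq> S0 \<and> card T = k}. \<Sum>i\<in>S0 - T. g T)"
    using assms by (intro sum.Sigma[symmetric]) auto
  also have "\<dots> = (\<Sum>T\<in>{T. T \<subseteq> S0 \<and> card T = k}. real (card S0 - k) * g T)"
    using fin by (intro sum.cong refl) (simp add: card_Diff_subset)
  finally show ?thesis
    by (simp add: sum_distrib_left)
qed

lemma funpow_annihA_phi_nths:
  assumes xs: "set xs \<subseteq> {0..N+1}" and S0: "S0 \<subseteq> {..<length xs}" and "m \<le> card S0"
  shows "(annihA N ^^ m) h (phi (nths xs S0)) =
    fact m * (\<Sum>S\<in>{S. S \<subseteq> S0 \<and> card S = card S0 - m}. h (phi (nths xs S)))"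
  using \<open>m \<le> card S0\<close>
proof (induction m arbitrary: h)
  case 0
  have "finite S0"
    using S0 finite_subset by blast
  then have "{S. S \<subseteq> S0 \<and> card S = card S0} = {S0}"
    using card_subset_eq by blast
  then show ?case
    by simp
next
  case (Suc m)
  have "finite S0"
    using S0 finite_subset by blast
  have card: "card S0 - m = Suc (card S0 - Suc m)"
    using Suc.prems by simp
  have "(annihA N ^^ Suc m) h (phi (nths xs S0)) = (annihA N ^^ m) (annihA N h) (phi (nths xs S0))"
    by (simp add: funpow_Suc_right del: funpow.simps)
  also have "\<dots> = fact m * (\<Sum>S\<in>{S. S \<subseteq> S0 \<and> card S = Suc (card S0 - Suc m)}.
      annihA N h (phi (nths xs S)))"
    using Suc.IH[of "annihA N h"] Suc.prems unfolding card by simp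
  also have "(\<Sum>S\<in>{S. S \<subseteq> S0 \<and> card S = Suc (card S0 - Suc m)}. annihA N h (phi (nths xs S))) =
      (\<Sum>S\<in>{S. S \<subseteq> S0 \<and> card S = Suc (card S0 - Suc m)}. \<Sum>i\<in>S. h (phi (nths xs (S - {i}))))"
    using S0 by (intro sum.cong refl annihA_phi_nths[OF xs]) auto
  also have "\<dots> = real (Suc m) * (\<Sum>S\<in>{S. S \<subseteq> S0 \<and> card S = card S0 - Suc m}. h (phi (nths xs S)))"
    using sum_subsets_remove_one[OF \<open>finite S0\<close>, where k = "card S0 - Suc m"
        and g = "\<lambda>S. h (phi (nths xs S))"] Suc.prems
    by simp
  finally show ?case
    by (simp add: algebra_simps)
qed

section \<open>Duality expansion of the absorption generating function\<close>

lemma absorb_gf_eq_Lim: "absorb_gf Q \<eta> z = Lim at_top (\<lambda>t. semigroup Q t (power_absorbed z) \<eta>)"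
  unfolding absorb_gf_def power_absorbed_def ..

locale consistent_absorbing_family =
  fixes N :: nat and S :: "nat \<Rightarrow> conf set" and Q :: "(conf \<Rightarrow> real) \<Rightarrow> conf \<Rightarrow> real"
    and P :: "conf \<Rightarrow> 'p set" and w :: "conf \<Rightarrow> 'p \<Rightarrow> real" and T :: "conf \<Rightarrow> 'p \<Rightarrow> conf"
  assumes jump_generator: "jump_generator (S n) Q P w T"
    and states_in_confs: "S n \<subseteq> confs N n"
    and remove_closed: "\<eta> \<in> S n \<Longrightarrow> x \<in> {0..N+1} \<Longrightarrow> 0 < \<eta> x \<Longrightarrow> \<eta>(x := \<eta> x - 1) \<in> S (n - 1)"
    and annihA_commute: "\<eta> \<in> S n \<Longrightarrow> Q (annihA N f) \<eta> = annihA N (Q f) \<eta>"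
    and absorbed_nondecreasing: "\<eta> \<in> S n \<Longrightarrow> p \<in> P \<eta> \<Longrightarrow> w \<eta> p \<noteq> 0 \<Longrightarrow> \<eta> 0 \<le> T \<eta> p 0"
begin

lemma annihA_cong:
  assumes \<eta>: "\<eta> \<in> S n" and eq: "\<forall>\<zeta>\<in>S (n - 1). h \<zeta> = h' \<zeta>"
  shows "annihA N h \<eta> = annihA N h' \<eta>"
  unfolding annihA_def
proof (intro sum.cong refl)
  fix x assume "x \<in> {0..N+1}"
  then show "real (\<eta> x) * h (\<eta>(x := \<eta> x - 1)) = real (\<eta> x) * h' (\<eta>(x := \<eta> x - 1))"
    using remove_closed[OF \<eta>] eq by (cases "\<eta> x = 0") auto
qed

lemma funpow_annihA_commute: "\<eta> \<in> S n \<Longrightarrow> (Q ^^ k) (annihA N f) \<eta> = annihA N ((Q ^^ k) f) \<eta>"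
proof (induction k arbitrary: n \<eta>)
  case (Suc k)
  then have "Q ((Q ^^ k) (annihA N f)) \<eta> = Q (annihA N ((Q ^^ k) f)) \<eta>"
    by (intro jump_generator.generator_cong[OF jump_generator]) auto
  then show ?case
    using annihA_commute[OF Suc.prems] by simp
qed simp

lemma semigroup_annihA_commute:
  assumes \<eta>: "\<eta> \<in> S n"
  shows "annihA N (semigroup Q t f) \<eta> = semigroup Q t (annihA N f) \<eta>"
proof -
  have inner: "summable (\<lambda>k. t ^ k / fact k * (Q ^^ k) f (\<eta>(x := \<eta> x - 1)))"
    if "x \<in> {0..N+1}" "\<eta> x \<noteq> 0" for x
    using remove_closed[OF \<eta> that(1)] that(2)
    by (intro jump_generator.summable_semigroup_series[OF jump_generator]) simp
  have summable: "summable (\<lambda>k. real (\<eta> x) * (t ^ k / fact k * (Q ^^ k) f (\<eta>(x := \<eta> x - 1))))"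
    if "x \<in> {0..N+1}" for x
  proof (cases "\<eta> x = 0")
    case False
    show ?thesis
      using inner[OF that False] by (rule summable_mult)
  qed simp
  have "annihA N (semigroup Q t f) \<eta> =
      (\<Sum>x\<in>{0..N+1}. \<Sum>k. real (\<eta> x) * (t ^ k / fact k * (Q ^^ k) f (\<eta>(x := \<eta> x - 1))))"
    unfolding annihA_def semigroup_def
  proof (intro sum.cong refl)
    fix x assume x: "x \<in> {0..N+1}"
    show "real (\<eta> x) * (\<Sum>k. t ^ k / fact k * (Q ^^ k) f (\<eta>(x := \<eta> x - 1))) =
        (\<Sum>k. real (\<eta> x) * (t ^ k / fact k * (Q ^^ k) f (\<eta>(x := \<eta> x - 1))))"
    proof (cases "\<eta> x = 0")
      case False
      show ?thesis
        by (rule suminf_mult[OF inner[OF x False], symmetric])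
    qed simp
  qed
  also have "\<dots> = (\<Sum>k. t ^ k / fact k * annihA N ((Q ^^ k) f) \<eta>)"
    unfolding annihA_def sum_distrib_left
    by (subst suminf_sum[OF summable, symmetric]) (auto intro!: suminf_cong sum.cong simp: mult_ac)
  also have "\<dots> = semigroup Q t (annihA N f) \<eta>"
    unfolding semigroup_def funpow_annihA_commute[OF \<eta>] ..
  finally show ?thesis .
qed

lemma semigroup_funpow_annihA_commute:
  "\<eta> \<in> S n \<Longrightarrow> (annihA N ^^ m) (semigroup Q t f) \<eta> = semigroup Q t ((annihA N ^^ m) f) \<eta>"
proof (induction m arbitrary: n \<eta>)
  case (Suc m)
  then have "annihA N ((annihA N ^^ m) (semigroup Q t f)) \<eta> =
      annihA N (semigroup Q t ((annihA N ^^ m) f)) \<eta>"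
    by (intro annihA_cong) auto
  then show ?case
    using semigroup_annihA_commute[OF Suc.prems] by simp
qed simp

lemma phi_nths_remove_in_states:
  assumes xs: "set xs \<subseteq> {0..N+1}" and I: "I \<subseteq> {..<length xs}" "phi (nths xs I) \<in> S (card I)"
    and d: "d \<in> I"
  shows "phi (nths xs (I - {d})) \<in> S (card (I - {d}))"
proof -
  let ?\<eta> = "phi (nths xs I)"
  have "finite I"
    using I(1) finite_subset by blast
  have "0 < ?\<eta> (xs ! d)"
    using d I(1) \<open>finite I\<close> by (auto simp: phi_nths_eq_card card_gt_0_iff)
  moreover have "xs ! d \<in> {0..N+1}"
    using xs I(1) d by (rule nth_in_sites)
  ultimately have "?\<eta>(xs ! d := ?\<eta> (xs ! d) - 1) \<in> S (card I - 1)"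
    using I(2) by (intro remove_closed)
  moreover have "card (I - {d}) = card I - 1"
    using \<open>finite I\<close> d by simp
  ultimately show ?thesis
    unfolding phi_nths_remove[OF I(1) d] by simp
qed

lemma phi_nths_in_states:
  assumes xs: "set xs \<subseteq> {0..N+1}" "phi xs \<in> S (length xs)" and "S' \<subseteq> {..<length xs}"
  shows "phi (nths xs S') \<in> S (card S')"
proof -
  have "phi (nths xs S') \<in> S (card S')" if "S' \<subseteq> {..<length xs}" "card S' + m = length xs" for m S'
    using that
  proof (induction m arbitrary: S')
    case 0
    then have "S' = {..<length xs}"
      by (simp add: card_subset_eq)
    then show ?case
      using xs by simp
  next
    case (Suc m)
    then have "S' \<noteq> {..<length xs}"
      by auto
    then obtain d where d: "d < length xs" "d \<notin> S'"
      using Suc.prems(1) by blast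
    have "finite S'"
      using Suc.prems finite_subset by blast
    then have "phi (nths xs (insert d S')) \<in> S (card (insert d S'))"
      using Suc.IH[of "insert d S'"] Suc.prems d by simp
    then show ?case
      using phi_nths_remove_in_states[OF xs(1), of "insert d S'" d] Suc.prems d by simp
  qed
  moreover have "card S' + (length xs - card S') = length xs"
    using card_mono[of "{..<length xs}" S'] assms(3) by simp
  ultimately show ?thesis
    using assms(3) by blast
qed

lemma semigroup_power_absorbed_tendsto:
  assumes \<eta>: "\<eta> \<in> S n"
  shows "((\<lambda>t. semigroup Q t (power_absorbed 0) \<eta>) \<longlongrightarrow> absorb_gf Q \<eta> 0) at_top"
proof -
  have "\<forall>\<zeta>\<in>S n. 0 \<le> power_absorbed 0 \<zeta>"
    by (simp add: power_absorbed_def)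
  moreover have "Q (power_absorbed 0) \<zeta> \<le> 0" if "\<zeta> \<in> S n" for \<zeta>
  proof (rule jump_generator.generator_nonpos[OF jump_generator _ that])
    fix \<zeta>' p assume "\<zeta>' \<in> S n" "p \<in> P \<zeta>'" "w \<zeta>' p \<noteq> 0"
    then have "\<zeta>' 0 \<le> T \<zeta>' p 0"
      by (rule absorbed_nondecreasing)
    then show "power_absorbed 0 (T \<zeta>' p) \<le> power_absorbed 0 \<zeta>'"
      by (simp add: power_absorbed_def power_0_left)
  qed
  ultimately obtain L where "((\<lambda>t. semigroup Q t (power_absorbed 0) \<eta>) \<longlongrightarrow> L) at_top"
    using jump_generator.semigroup_convergent_at_top[OF jump_generator \<eta>] by blast
  then show ?thesis
    unfolding absorb_gf_eq_Lim by (simp add: tendsto_Lim)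
qed

lemma semigroup_power_absorbed_expansion:
  assumes xs: "set xs \<subseteq> {0..N+1}" "phi xs \<in> S (length xs)"
  shows "semigroup Q t (power_absorbed z) (phi xs) =
    (\<Sum>k\<le>length xs. z ^ (length xs - k) * (1 - z) ^ k *
       (\<Sum>S'\<in>{S'. S' \<subseteq> {..<length xs} \<and> card S' = k}. semigroup Q t (power_absorbed 0) (phi (nths xs S'))))"
proof -
  define n where "n = length xs"
  define a where "a = (\<lambda>k. z ^ (n - k) * (1 - z) ^ k / fact (n - k))"
  have \<eta>: "phi xs \<in> S n"
    using xs(2) by (simp add: n_def)
  have "semigroup Q t (power_absorbed z) (phi xs) =
      semigroup Q t (\<lambda>\<zeta>. \<Sum>k\<le>n. a k * (annihA N ^^ (n - k)) (power_absorbed 0) \<zeta>) (phi xs)"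
    using states_in_confs[of n] power_absorbed_eq_annihA_sum
    by (intro jump_generator.semigroup_cong[OF jump_generator \<eta>]) (auto simp: a_def)
  also have "\<dots> = (\<Sum>k\<le>n. a k * semigroup Q t ((annihA N ^^ (n - k)) (power_absorbed 0)) (phi xs))"
    by (rule jump_generator.semigroup_sum[OF jump_generator \<eta>]) simp
  also have "\<dots> = (\<Sum>k\<le>n. a k * (annihA N ^^ (n - k)) (semigroup Q t (power_absorbed 0)) (phi xs))"
    using semigroup_funpow_annihA_commute[OF \<eta>] by simp
  also have "\<dots> = (\<Sum>k\<le>n. z ^ (n - k) * (1 - z) ^ k *
       (\<Sum>S'\<in>{S'. S' \<subseteq> {..<n} \<and> card S' = k}. semigroup Q t (power_absorbed 0) (phi (nths xs S'))))"
  proof (intro sum.cong refl)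
    fix k assume "k \<in> {..n}"
    then have "(annihA N ^^ (n - k)) (semigroup Q t (power_absorbed 0)) (phi (nths xs {..<n})) =
        fact (n - k) * (\<Sum>S'\<in>{S'. S' \<subseteq> {..<n} \<and> card S' = k}. semigroup Q t (power_absorbed 0) (phi (nths xs S')))"
      using funpow_annihA_phi_nths[OF xs(1), of "{..<n}" "n - k"] by (simp add: n_def)
    then show "a k * (annihA N ^^ (n - k)) (semigroup Q t (power_absorbed 0)) (phi xs) =
        z ^ (n - k) * (1 - z) ^ k *
        (\<Sum>S'\<in>{S'. S' \<subseteq> {..<n} \<and> card S' = k}. semigroup Q t (power_absorbed 0) (phi (nths xs S')))"
      by (simp add: a_def n_def)
  qed
  finally show ?thesis
    unfolding n_def .
qed

lemma absorb_gf_expansion: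
  assumes "set xs \<subseteq> {0..N+1}" "phi xs \<in> S (length xs)"
  shows "absorb_gf Q (phi xs) z =
    (\<Sum>k\<le>length xs. z ^ (length xs - k) * (1 - z) ^ k *
       (\<Sum>S'\<in>{S'. S' \<subseteq> {..<length xs} \<and> card S' = k}. absorb_gf Q (phi (nths xs S')) 0))"
proof -
  have "((\<lambda>t. semigroup Q t (power_absorbed z) (phi xs)) \<longlongrightarrow>
      (\<Sum>k\<le>length xs. z ^ (length xs - k) * (1 - z) ^ k *
       (\<Sum>S'\<in>{S'. S' \<subseteq> {..<length xs} \<and> card S' = k}. absorb_gf Q (phi (nths xs S')) 0))) at_top"
    unfolding semigroup_power_absorbed_expansion[OF assms]
    by (intro tendsto_sum tendsto_mult_left semigroup_power_absorbed_tendsto[OF phi_nths_in_states[OF assms]])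
      auto
  then show ?thesis
    unfolding absorb_gf_eq_Lim by (simp add: tendsto_Lim)
qed

end

section \<open>The absorbing process and independent walkers\<close>

lemma finite_OmegaV: "finite (OmegaV N Lam m)"
proof (rule finite_subset)
  show "OmegaV N Lam m \<subseteq> {\<xi>. \<forall>x. (x \<in> {1..N} \<longrightarrow> \<xi> x \<in> {0..m}) \<and> (x \<notin> {1..N} \<longrightarrow> \<xi> x = 0)}"
    unfolding OmegaV_def by (auto intro: order_trans[OF member_le_sum[of _ "{1..N}"]])
  show "finite {\<xi>::conf. \<forall>x. (x \<in> {1..N} \<longrightarrow> \<xi> x \<in> {0..m}) \<and> (x \<notin> {1..N} \<longrightarrow> \<xi> x = 0)}"
    by (rule finite_set_of_finite_funs) auto
qed

locale consistent_system =
  fixes N :: nat and Lam :: "nat set" and c :: "conf \<Rightarrow> conf \<Rightarrow> real" and r :: "nat \<Rightarrow> nat \<Rightarrow> real"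
  assumes zero_in_Lam: "0 \<in> Lam" and Lam_downward_closed: "\<forall>k\<in>Lam. \<forall>j\<le>k. j \<in> Lam"
    and c_nonneg: "\<forall>m. \<forall>\<xi>\<in>OmegaV N Lam m. \<forall>\<xi>'\<in>OmegaV N Lam m. 0 \<le> c \<xi> \<xi>'"
    and r_nonneg: "\<forall>i\<in>{1..N}. \<forall>j\<in>{0, N+1}. 0 \<le> r i j"
    and consistent: "consistent N Lam c r"
begin

definition valid_confs :: "nat \<Rightarrow> conf set" where
  "valid_confs n = {\<eta> \<in> confs N n. valid N Lam \<eta>}"

text \<open>A jump of \<open>genLabs\<close> is either a rearrangement of the bulk into \<open>\<xi>\<close> (\<open>Inl \<xi>\<close>)
  or the absorption of a particle from \<open>i\<close> into \<open>j\<close> (\<open>Inr (i, j)\<close>).\<close>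

definition jumps_abs :: "conf \<Rightarrow> (conf + nat \<times> nat) set" where
  "jumps_abs \<eta> = OmegaV N Lam (\<Sum>i\<in>{1..N}. \<eta> i) <+> {1..N} \<times> {0, N+1}"

definition rate_abs :: "conf \<Rightarrow> conf + nat \<times> nat \<Rightarrow> real" where
  "rate_abs \<eta> p = (case p of Inl \<xi> \<Rightarrow> c (restrV N \<eta>) \<xi> | Inr (i, j) \<Rightarrow> r i j * real (\<eta> i))"

definition target_abs :: "conf \<Rightarrow> conf + nat \<times> nat \<Rightarrow> conf" where
  "target_abs \<eta> p = (case p of Inl \<xi> \<Rightarrow> (\<lambda>y. \<xi> y + absPart N \<eta> y)
                               | Inr (i, j) \<Rightarrow> \<eta>(i := \<eta> i - 1, j := \<eta> j + 1))"

lemma valid_remove: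
  assumes "valid N Lam \<eta>"
  shows "valid N Lam (\<eta>(x := \<eta> x - 1))"
proof -
  have "\<eta> x - 1 \<in> Lam" if "x \<in> {1..N}"
    using assms that Lam_downward_closed unfolding valid_def by (meson diff_le_self)
  then show ?thesis
    using assms unfolding valid_def by auto
qed

lemma restrV_in_OmegaV: "valid N Lam \<eta> \<Longrightarrow> restrV N \<eta> \<in> OmegaV N Lam (\<Sum>i\<in>{1..N}. \<eta> i)"
  unfolding OmegaV_def restrV_def valid_def by auto

lemma bulk_move_in_valid_confs:
  assumes \<eta>: "\<eta> \<in> valid_confs n" and \<xi>: "\<xi> \<in> OmegaV N Lam (\<Sum>i\<in>{1..N}. \<eta> i)"
  shows "(\<lambda>y. \<xi> y + absPart N \<eta> y) \<in> valid_confs n"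
proof -
  have \<xi>_bulk: "\<xi> y = 0" if "y \<notin> {1..N}" for y
    using \<xi> that by (auto simp: OmegaV_def)
  have "valid N Lam (\<lambda>y. \<xi> y + absPart N \<eta> y)"
    using \<eta> \<xi> \<xi>_bulk by (auto simp: valid_def valid_confs_def confs_def OmegaV_def absPart_def)
  moreover have "particles N (\<lambda>y. \<xi> y + absPart N \<eta> y) = particles N \<eta>"
  proof -
    have "(\<Sum>i\<in>{1..N}. \<xi> i + absPart N \<eta> i) = (\<Sum>i\<in>{1..N}. \<eta> i)"
      using \<xi> by (simp add: absPart_def OmegaV_def)
    moreover have "(\<Sum>x\<in>{0..N+1}. f x) = f 0 + (\<Sum>x\<in>{1..N}. f x) + f (N+1)" for f :: "nat \<Rightarrow> nat"
      by (simp add: sum.atLeast0_atMost_Suc sum.atLeast_Suc_atMost)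
    ultimately show ?thesis
      using \<xi>_bulk[of 0] \<xi>_bulk[of "N+1"] unfolding particles_def by (simp add: absPart_def)
  qed
  ultimately show ?thesis
    using \<eta> \<xi>_bulk by (auto simp: valid_confs_def confs_def absPart_def)
qed

lemma absorption_in_valid_confs:
  assumes "\<eta> \<in> valid_confs n" "i \<in> {1..N}" "j \<in> {0, N+1}" "0 < \<eta> i"
  shows "\<eta>(i := \<eta> i - 1, j := \<eta> j + 1) \<in> valid_confs n"
proof -
  have "valid N Lam (\<eta>(i := \<eta> i - 1, j := \<eta> j + 1))"
    using assms valid_remove[of \<eta> i] by (auto simp: valid_def valid_confs_def)
  then show ?thesis
    using assms move_in_confs[of \<eta> N n i j] by (auto simp: valid_confs_def)
qed

lemma jump_generator_abs: "jump_generator (valid_confs n) (genLabs N Lam c r) jumps_abs rate_abs target_abs"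
proof
  show "finite (valid_confs n)"
    using finite_confs by (rule rev_finite_subset) (auto simp: valid_confs_def)
next
  fix \<eta> p assume \<eta>: "\<eta> \<in> valid_confs n" and p: "p \<in> jumps_abs \<eta>"
  show "0 \<le> rate_abs \<eta> p"
    using p c_nonneg r_nonneg restrV_in_OmegaV \<eta>
    by (cases p) (auto simp: rate_abs_def jumps_abs_def valid_confs_def)
  show "target_abs \<eta> p \<in> valid_confs n" if "rate_abs \<eta> p \<noteq> 0"
    using p that bulk_move_in_valid_confs[OF \<eta>] absorption_in_valid_confs[OF \<eta>]
    by (cases p) (auto simp: rate_abs_def target_abs_def jumps_abs_def)
next
  fix \<eta> g
  have absorptions: "finite ({1..N} \<times> {0, N+1})"
    by simp
  have "genH N r g \<eta> = (\<Sum>p\<in>{1..N} \<times> {0, N+1}. rate_abs \<eta> (Inr p) * (g (target_abs \<eta> (Inr p)) - g \<eta>))"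
    unfolding genH_def sum.cartesian_product
    by (intro sum.cong refl) (simp add: rate_abs_def target_abs_def split: prod.splits)
  then show "genLabs N Lam c r g \<eta> = (\<Sum>p\<in>jumps_abs \<eta>. rate_abs \<eta> p * (g (target_abs \<eta> p) - g \<eta>))"
    unfolding jumps_abs_def genLabs_def genL_def sum.Plus[OF finite_OmegaV absorptions]
    by (simp add: rate_abs_def target_abs_def comp_def)
qed

lemma valid_delta_if_OmegaV_nonempty:
  assumes x: "x \<in> {0..N+1}" and \<xi>: "\<xi> \<in> OmegaV N Lam (\<Sum>i\<in>{1..N}. delta x i)"
  shows "valid N Lam (delta x)"
proof (cases "x \<in> {1..N}")
  case True
  then have "(\<Sum>i\<in>{1..N}. \<xi> i) = 1"
    using \<xi> by (simp add: OmegaV_def delta_def)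
  then obtain i where "i \<in> {1..N}" "\<xi> i \<noteq> 0"
    by (metis one_neq_zero sum.neutral)
  moreover have "\<xi> i \<in> Lam" if "i \<in> {1..N}" for i
    using \<xi> that by (simp add: OmegaV_def)
  ultimately have "1 \<in> Lam"
    using Lam_downward_closed by (meson less_one not_le)
  then show ?thesis
    using x zero_in_Lam by (auto simp: valid_def delta_def)
qed (use x zero_in_Lam in \<open>auto simp: valid_def delta_def\<close>)

lemma rw_rate_nonneg:
  assumes x: "x \<in> {0..N+1}" and "x \<noteq> y"
  shows "0 \<le> rw_rate N Lam c r x y"
proof -
  define g where "g = (\<lambda>\<zeta>::conf. if \<zeta> = delta y then 1 else (0::real))"
  have g: "g (delta x) = 0" "\<And>\<zeta>. 0 \<le> g \<zeta>"
    using delta_inj \<open>x \<noteq> y\<close> by (auto simp: g_def)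
  have "0 \<le> c (restrV N (delta x)) \<xi>"
    if "\<xi> \<in> OmegaV N Lam (\<Sum>i\<in>{1..N}. delta x i)" for \<xi>
    using c_nonneg that restrV_in_OmegaV[OF valid_delta_if_OmegaV_nonempty[OF x that]] by blast
  then have "0 \<le> genL N Lam c g (delta x)"
    unfolding genL_def using g by (intro sum_nonneg) simp
  moreover have "0 \<le> genH N r g (delta x)"
    unfolding genH_def using g r_nonneg by (intro sum_nonneg) (auto intro!: mult_nonneg_nonneg)
  ultimately show ?thesis
    unfolding rw_rate_def genLabs_def g_def by simp
qed

lemma rw_rate_from_0: "rw_rate N Lam c r 0 y = 0"
proof -
  have "(\<lambda>y. \<xi> y + absPart N (delta 0) y) = delta 0" if "\<xi> \<in> OmegaV N Lam 0" for \<xi>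
  proof -
    have "\<xi> = (\<lambda>_. 0)"
      using that by (auto simp: OmegaV_def fun_eq_iff)
    then show ?thesis
      by (auto simp: absPart_def delta_def fun_eq_iff)
  qed
  then have "genL N Lam c f (delta 0) = 0" for f
    unfolding genL_def by (intro sum.neutral) (simp add: delta_def)
  moreover have "genH N r f (delta 0) = 0" for f
    unfolding genH_def by (intro sum.neutral) (auto simp: delta_def)
  ultimately show ?thesis
    unfolding rw_rate_def genLabs_def by simp
qed

definition jumps_irw :: "conf \<Rightarrow> (nat \<times> nat) set" where
  "jumps_irw \<eta> = (SIGMA x:{0..N+1}. {0..N+1} - {x})"

definition rate_irw :: "conf \<Rightarrow> nat \<times> nat \<Rightarrow> real" where
  "rate_irw \<eta> p = (case p of (x, y) \<Rightarrow> real (\<eta> x) * rw_rate N Lam c r x y)"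

definition target_irw :: "conf \<Rightarrow> nat \<times> nat \<Rightarrow> conf" where
  "target_irw \<eta> p = (case p of (x, y) \<Rightarrow> \<eta>(x := \<eta> x - 1, y := \<eta> y + 1))"

lemma jump_generator_irw: "jump_generator (confs N n) (genIRW N Lam c r) jumps_irw rate_irw target_irw"
proof
  show "finite (confs N n)"
    by (rule finite_confs)
  show "0 \<le> rate_irw \<eta> p" if "\<eta> \<in> confs N n" "p \<in> jumps_irw \<eta>" for \<eta> p
    using that rw_rate_nonneg by (auto simp: jumps_irw_def rate_irw_def intro!: mult_nonneg_nonneg)
  show "target_irw \<eta> p \<in> confs N n" if \<eta>: "\<eta> \<in> confs N n" and p: "p \<in> jumps_irw \<eta>" and w: "rate_irw \<eta> p \<noteq> 0" for \<eta> p
  proof -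
    obtain x y where xy: "p = (x, y)" "x \<in> {0..N+1}" "y \<in> {0..N+1}" "x \<noteq> y"
      using p unfolding jumps_irw_def by blast
    moreover have "0 < \<eta> x"
      using w xy(1) by (simp add: rate_irw_def)
    ultimately show ?thesis
      using move_in_confs[OF \<eta>] by (simp add: target_irw_def)
  qed
  show "genIRW N Lam c r g \<eta> = (\<Sum>p\<in>jumps_irw \<eta>. rate_irw \<eta> p * (g (target_irw \<eta> p) - g \<eta>))" for g \<eta>
    unfolding genIRW_def jumps_irw_def
    by (subst sum.Sigma) (auto intro!: sum.cong simp: rate_irw_def target_irw_def)
qed

lemma family_abs:
  "consistent_absorbing_family N valid_confs (genLabs N Lam c r) jumps_abs rate_abs target_abs"
proof (rule consistent_absorbing_family.intro)
  show "jump_generator (valid_confs n) (genLabs N Lam c r) jumps_abs rate_abs target_abs" for n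
    by (rule jump_generator_abs)
  show "valid_confs n \<subseteq> confs N n" for n
    by (auto simp: valid_confs_def)
  show "\<eta>(x := \<eta> x - 1) \<in> valid_confs (n - 1)"
    if "\<eta> \<in> valid_confs n" "x \<in> {0..N+1}" "0 < \<eta> x" for \<eta> n x
    using that remove_in_confs valid_remove by (auto simp: valid_confs_def)
  show "genLabs N Lam c r (annihA N f) \<eta> = annihA N (genLabs N Lam c r f) \<eta>"
    if "\<eta> \<in> valid_confs n" for \<eta> n f
    using that consistent by (auto simp: consistent_def valid_confs_def)
  show "\<eta> 0 \<le> target_abs \<eta> p 0"
    if "\<eta> \<in> valid_confs n" "p \<in> jumps_abs \<eta>" "rate_abs \<eta> p \<noteq> 0" for \<eta> n p
    using that by (auto simp: jumps_abs_def target_abs_def absPart_def)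
qed

lemma family_irw: "consistent_absorbing_family N (confs N) (genIRW N Lam c r) jumps_irw rate_irw target_irw"
proof (rule consistent_absorbing_family.intro)
  show "jump_generator (confs N n) (genIRW N Lam c r) jumps_irw rate_irw target_irw" for n
    by (rule jump_generator_irw)
  show "\<eta>(x := \<eta> x - 1) \<in> confs N (n - 1)" if "\<eta> \<in> confs N n" "x \<in> {0..N+1}" "0 < \<eta> x" for \<eta> n x
    using that by (rule remove_in_confs)
  show "genIRW N Lam c r (annihA N f) \<eta> = annihA N (genIRW N Lam c r f) \<eta>"
    if "\<eta> \<in> confs N n" for \<eta> n f
    by (rule genIRW_annihA_commute)
  show "\<eta> 0 \<le> target_irw \<eta> p 0"
    if "\<eta> \<in> confs N n" "p \<in> jumps_irw \<eta>" "rate_irw \<eta> p \<noteq> 0" for \<eta> n p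
    using that rw_rate_from_0 by (auto simp: rate_irw_def target_irw_def split: prod.splits)
qed simp

lemma genIRW_delta:
  assumes a: "a \<in> {0..N+1}"
  shows "genIRW N Lam c r h (delta a) =
    (\<Sum>y\<in>{0..N+1} - {a}. rw_rate N Lam c r a y * (h (delta y) - h (delta a)))"
proof -
  let ?G = "\<lambda>x. \<Sum>y\<in>{0..N+1} - {x}. real (delta a x) * rw_rate N Lam c r x y *
      (h ((delta a)(x := delta a x - 1, y := delta a y + 1)) - h (delta a))"
  have "genIRW N Lam c r h (delta a) = ?G a + (\<Sum>x\<in>{0..N+1} - {a}. ?G x)"
    unfolding genIRW_def by (rule sum.remove[OF finite_atLeastAtMost a])
  moreover have "(\<Sum>x\<in>{0..N+1} - {a}. ?G x) = 0"
    by (rule sum.neutral) (simp add: delta_def)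
  moreover have "(delta a)(a := delta a a - 1, y := delta a y + 1) = delta y" if "y \<noteq> a" for y
    using that by (auto simp: delta_def fun_eq_iff)
  then have "?G a = (\<Sum>y\<in>{0..N+1} - {a}. rw_rate N Lam c r a y * (h (delta y) - h (delta a)))"
    by (intro sum.cong refl) (simp add: delta_def)
  ultimately show ?thesis
    by simp
qed

lemma genLabs_delta:
  assumes a: "a \<in> {0..N+1}" and "valid N Lam (delta a)"
  shows "genLabs N Lam c r h (delta a) =
    (\<Sum>y\<in>{0..N+1} - {a}. rw_rate N Lam c r a y * (h (delta y) - h (delta a)))"
proof -
  have "delta a \<in> valid_confs 1"
    using assms delta_in_confs by (simp add: valid_confs_def)
  then have "genLabs N Lam c r h (delta a) = (\<Sum>\<zeta>\<in>confs N 1 - {delta a}.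
      genLabs N Lam c r (\<lambda>\<xi>. if \<xi> = \<zeta> then 1 else 0) (delta a) * (h \<zeta> - h (delta a)))"
    by (rule jump_generator.generator_eq_jump_rates[OF jump_generator_abs _ finite_confs])
      (auto simp: valid_confs_def)
  also have "confs N 1 - {delta a} = delta ` ({0..N+1} - {a})"
    unfolding confs_1 using delta_inj by blast
  finally show ?thesis
    using delta_inj by (simp add: sum.reindex inj_on_def rw_rate_def)
qed

lemma genLabs_eq_genIRW_le_one:
  assumes \<eta>: "\<eta> \<in> valid_confs n" and "n \<le> 1"
  shows "genLabs N Lam c r g \<eta> = genIRW N Lam c r g \<eta>"
proof (cases n)
  case 0
  then have "\<eta> = (\<lambda>_. 0)"
    using \<eta> confs_0 by (auto simp: valid_confs_def)
  moreover have "genLabs N Lam c r g \<eta> = (\<Sum>\<zeta>\<in>confs N 0 - {\<eta>}.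
      genLabs N Lam c r (\<lambda>\<xi>. if \<xi> = \<zeta> then 1 else 0) \<eta> * (g \<zeta> - g \<eta>))"
    using \<eta> 0
    by (intro jump_generator.generator_eq_jump_rates[OF jump_generator_abs _ finite_confs])
      (auto simp: valid_confs_def)
  ultimately show ?thesis
    by (simp add: confs_0 genIRW_def)
next
  case (Suc m)
  then obtain a where "a \<in> {0..N+1}" "\<eta> = delta a"
    using \<eta> \<open>n \<le> 1\<close> confs_1 by (auto simp: valid_confs_def)
  then show ?thesis
    using \<eta> genLabs_delta genIRW_delta by (simp add: valid_confs_def)
qed

lemma calG_0_eq_0_le_one:
  assumes "\<eta> \<in> valid_confs n" and "n \<le> 1"
  shows "calG N Lam c r \<eta> 0 = 0"
proof -
  have "semigroup (genLabs N Lam c r) t f \<eta> = semigroup (genIRW N Lam c r) t f \<eta>" for t f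
    using assms genLabs_eq_genIRW_le_one
    by (intro jump_generator.semigroup_eq_if_generator_eq[OF jump_generator_abs]) auto
  then show ?thesis
    unfolding calG_def absorb_gf_def by simp
qed

lemma phi_in_valid_confs:
  "set xs \<subseteq> {0..N+1} \<Longrightarrow> valid N Lam (phi xs) \<Longrightarrow> phi xs \<in> valid_confs (length xs)"
  using phi_in_confs by (simp add: valid_confs_def)

lemma calG_expansion:
  assumes xs: "set xs \<subseteq> {0..N+1}" "valid N Lam (phi xs)"
  shows "calG N Lam c r (phi xs) z =
    (\<Sum>\<kappa>\<le>length xs. z ^ (length xs - \<kappa>) * (1 - z) ^ \<kappa> *
       (\<Sum>S\<in>{S. S \<subseteq> {..<length xs} \<and> card S = \<kappa>}. calG N Lam c r (phi (nths xs S)) 0))"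
  unfolding calG_def
    consistent_absorbing_family.absorb_gf_expansion[OF family_abs xs(1) phi_in_valid_confs[OF xs]]
    consistent_absorbing_family.absorb_gf_expansion[OF family_irw xs(1) phi_in_confs[OF xs(1)]]
  by (simp add: sum_subtractf right_diff_distrib)

lemma calG_0_nths_le_one:
  assumes xs: "set xs \<subseteq> {0..N+1}" "valid N Lam (phi xs)"
    and "S \<subseteq> {..<length xs}" "card S \<le> 1"
  shows "calG N Lam c r (phi (nths xs S)) 0 = 0"
  using consistent_absorbing_family.phi_nths_in_states[OF family_abs xs(1) phi_in_valid_confs[OF xs] assms(3)]
    assms(4)
  by (rule calG_0_eq_0_le_one)

end

theorem theorem5p9:
  fixes N :: nat and Lam :: "nat set" and c :: "conf \<Rightarrow> conf \<Rightarrow> real"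
    and r :: "nat \<Rightarrow> nat \<Rightarrow> real" and xs :: "nat list" and z :: real
  assumes "0 \<in> Lam" and "\<forall>k\<in>Lam. \<forall>j\<le>k. j \<in> Lam"
    and "\<forall>m. \<forall>\<xi>\<in>OmegaV N Lam m. \<forall>\<xi>'\<in>OmegaV N Lam m. 0 \<le> c \<xi> \<xi>'"
    and "\<forall>i\<in>{1..N}. \<forall>j\<in>{0, N+1}. 0 \<le> r i j"
    and "consistent N Lam c r"
    and "set xs \<subseteq> {0..N+1}" and "valid N Lam (phi xs)"
    and "0 \<le> z"
  shows "calG N Lam c r (phi xs) z =
    (\<Sum>\<kappa>=2..length xs. z ^ (length xs - \<kappa>) * (1 - z) ^ \<kappa> *
       (\<Sum>S\<in>{S. S \<subseteq> {..<length xs} \<and> card S = \<kappa>}. calG N Lam c r (phi (nths xs S)) 0))"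
proof -
  interpret consistent_system N Lam c r
    using assms(1-5) by unfold_locales
  let ?G = "\<lambda>\<kappa>. z ^ (length xs - \<kappa>) * (1 - z) ^ \<kappa> *
    (\<Sum>S\<in>{S. S \<subseteq> {..<length xs} \<and> card S = \<kappa>}. calG N Lam c r (phi (nths xs S)) 0)"
  have "calG N Lam c r (phi xs) z = (\<Sum>\<kappa>\<le>length xs. ?G \<kappa>)"
    by (rule calG_expansion[OF assms(6,7)])
  also have "\<dots> = (\<Sum>\<kappa>=2..length xs. ?G \<kappa>)"
    using calG_0_nths_le_one[OF assms(6,7)] by (intro sum.mono_neutral_right) auto
  finally show ?thesis .
qed

end
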